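(* Let $\Omega\subset\mathbb C^n$ be a bounded open set and $q,\tilde q\in\mathbb R$ with $\tilde q>q>1$. Suppose that for every $\zeta\in\partial\Omega$ there exists $f_\zeta\in\bigcap_{p<q}\mathcal{O}L^p(\Omega)$ with $\int_{B(\zeta,\varepsilon)\cap\Omega}|f_\zeta|^{\tilde q}\,dv=+\infty$ for every $\varepsilon>0$. Then the set $$\Big\{g\in\bigcap_{p<q}\mathcal{O}L^p(\Omega): \int_{B(\zeta,\varepsilon)\cap\Omega}|g|^{\tilde q}\,dv=+\infty\ \text{for every }\zeta\in\partial\Omega,\ \varepsilon>0\Big\}$$ is dense and $G_\delta$ in $\bigcap_{p<q}\mathcal{O}L^p(\Omega)$.
   Context: For a bounded open $\Omega\subset\mathbb C^n$ and $p\ge1$, $\mathcal{O}L^p(\Omega)$ is the Banach space of holomorphic $f$ on $\Omega$ with $\|f\|_p=(\int_\Omega|f|^p\,dv)^{1/p}<\infty$. For $q>1$, $\bigcap_{p<q}\mathcal{O}L^p(\Omega)$ carries the complete metric $d(f,g)=\sum_j2^{-j}\frac{\|f-g\|_{p_j}}{1+\|f-g\|_{p_j}}$ with $1<p_1<p_2<\dots$, $p_j\to q$; convergence means $\|f_k-f\|_p\to0$ for all $p<q$. *)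

theory Defs
  imports "HOL-Analysis.Analysis"
begin

text \<open>C^n is modelled as complex ^ 'n for a finite index type 'n; volume dv is lborel
  (Lebesgue measure on C^n identified with R^(2n)).\<close>

definition holo_on :: "(complex ^ 'n \<Rightarrow> complex) \<Rightarrow> (complex ^ 'n) set \<Rightarrow> bool" where
  "holo_on f \<Omega> \<longleftrightarrow> (\<forall>z\<in>\<Omega>. \<exists>L. (f has_derivative L) (at z) \<and>
       (\<forall>c v. L (c *s v) = c * L v))"

definition Lp_int :: "real \<Rightarrow> (complex ^ 'n) set \<Rightarrow> (complex ^ 'n \<Rightarrow> complex) \<Rightarrow> ennreal" where
  "Lp_int p A f = (\<integral>\<^sup>+ z. indicator A z * ennreal (norm (f z) powr p) \<partial>lborel)"

text \<open>The L^p norm over \<Omega> (as a real number; meaningful when the integral is finite).\<close>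
definition Lp_norm :: "real \<Rightarrow> (complex ^ 'n) set \<Rightarrow> (complex ^ 'n \<Rightarrow> complex) \<Rightarrow> real" where
  "Lp_norm p \<Omega> f = (enn2real (Lp_int p \<Omega> f)) powr (1 / p)"

text \<open>O L^p(\<Omega>), with functions restricted to \<Omega> (value 0 outside), so elements are equal
  iff they agree on \<Omega>.\<close>
definition OLp :: "real \<Rightarrow> (complex ^ 'n) set \<Rightarrow> (complex ^ 'n \<Rightarrow> complex) set" where
  "OLp p \<Omega> = {f. holo_on f \<Omega> \<and> (\<forall>z. z \<notin> \<Omega> \<longrightarrow> f z = 0) \<and> Lp_int p \<Omega> f < \<infinity>}"

text \<open>\<Inter>_{p<q} O L^p(\<Omega>) (p ranging over [1,q), as O L^p is defined for p \<ge> 1).\<close>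
definition OLp_below :: "real \<Rightarrow> (complex ^ 'n) set \<Rightarrow> (complex ^ 'n \<Rightarrow> complex) set" where
  "OLp_below q \<Omega> = (\<Inter>p\<in>{1..<q}. OLp p \<Omega>)"

definition pexp :: "real \<Rightarrow> nat \<Rightarrow> real" where
  "pexp q j = q - (q - 1) / (real j + 1)"

definition OLp_dist :: "real \<Rightarrow> (complex ^ 'n) set \<Rightarrow> (complex ^ 'n \<Rightarrow> complex) \<Rightarrow> (complex ^ 'n \<Rightarrow> complex) \<Rightarrow> real" where
  "OLp_dist q \<Omega> f g = (\<Sum>j. (1/2) ^ (Suc j) *
      (Lp_norm (pexp q (Suc j)) \<Omega> (\<lambda>z. f z - g z) / (1 + Lp_norm (pexp q (Suc j)) \<Omega> (\<lambda>z. f z - g z))))"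

definition OLp_top :: "real \<Rightarrow> (complex ^ 'n) set \<Rightarrow> (complex ^ 'n \<Rightarrow> complex) topology" where
  "OLp_top q \<Omega> = Metric_space.mtopology (OLp_below q \<Omega>) (OLp_dist q \<Omega>)"

end

theory Submission
  imports Defs "HOL-Complex_Analysis.Cauchy_Integral_Formula"
begin

text \<open>For a countable basis \<open>(C\<^sub>i)\<close> of \<open>\<complex>\<^sup>n\<close>, a function of \<open>\<Inter>\<^sub>p\<^sub><\<^sub>q \<O>L\<^sup>p(\<Omega>)\<close> lies
  in the set iff \<open>\<integral>\<^bsub>C\<^sub>i \<inter> \<Omega>\<^esub> |g|\<^sup>q\<^sup>t = \<infinity>\<close> for each \<open>C\<^sub>i\<close> meeting \<open>\<partial>\<Omega>\<close>. Convergence in the metric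
  implies \<open>L\<^sup>p\<close>-convergence, hence a.e. convergence of a subsequence, so by Fatou
  \<open>g \<mapsto> \<integral>\<^sub>A |g|\<^sup>q\<^sup>t\<close> is lower semicontinuous; the set is therefore the countable intersection of
  the open sets \<open>{g. \<integral>\<^bsub>C\<^sub>i \<inter> \<Omega>\<^esub> |g|\<^sup>q\<^sup>t > m}\<close>, a \<open>G\<^sub>\<delta>\<close>.

  Given one element \<open>h\<close>, for every \<open>g\<close> and every \<open>C\<^sub>i\<close> at most one real \<open>t\<close> makes
  \<open>\<integral>\<^bsub>C\<^sub>i \<inter> \<Omega>\<^esub> |g + t h|\<^sup>q\<^sup>t\<close> finite, so \<open>g + t h\<close> lies in the set for all but countably many \<open>t\<close>,
  in particular for arbitrarily small \<open>t > 0\<close>: the set is dense. One element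
  \<open>h = \<Sum>\<^sub>k t\<^sub>k F\<^sub>k\<close> is obtained from the functions \<open>f\<^sub>\<zeta>\<close> of the hypothesis by choosing the
  coefficients inductively, small enough for convergence in every \<open>L\<^sup>p\<close>, \<open>p < q\<close>, and locally
  uniformly (so that \<open>h\<close> is holomorphic by Cauchy's estimates), yet keeping the blow-up of the
  partial sums on large compact pieces of each \<open>C\<^sub>i \<inter> \<Omega>\<close>.\<close>

section \<open>Integrals of \<open>|f|\<^sup>p\<close>\<close>

lemma holo_on_imp_continuous_on:
  assumes "holo_on f \<Omega>" shows "continuous_on \<Omega> f"
  using assms unfolding holo_on_def
  by (meson continuous_at_imp_continuous_on has_derivative_continuous)

lemma holo_on_add_cmult:
  assumes "holo_on f \<Omega>" "holo_on g \<Omega>"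
  shows "holo_on (\<lambda>z. f z + c * g z) \<Omega>"
  unfolding holo_on_def
proof
  fix z assume z: "z \<in> \<Omega>"
  obtain L1 where L1: "(f has_derivative L1) (at z)" "\<forall>c v. L1 (c *s v) = c * L1 v"
    using assms(1) z unfolding holo_on_def by blast
  obtain L2 where L2: "(g has_derivative L2) (at z)" "\<forall>c v. L2 (c *s v) = c * L2 v"
    using assms(2) z unfolding holo_on_def by blast
  have "((\<lambda>z. f z + c * g z) has_derivative (\<lambda>v. L1 v + c * L2 v)) (at z)"
    by (intro has_derivative_add has_derivative_mult_right L1 L2)
  moreover have "\<forall>c' v. L1 (c' *s v) + c * L2 (c' *s v) = c' * (L1 v + c * L2 v)"
    using L1(2) L2(2) by (simp add: algebra_simps)
  ultimately show "\<exists>L. ((\<lambda>z. f z + c * g z) has_derivative L) (at z) \<and> (\<forall>c v. L (c *s v) = c * L v)"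
    by blast
qed

lemma holo_on_cmult:
  assumes "holo_on f \<Omega>" shows "holo_on (\<lambda>z. c * f z) \<Omega>"
proof -
  have "holo_on (\<lambda>_. 0) \<Omega>"
    unfolding holo_on_def by (auto intro!: exI[of _ "\<lambda>_. 0"])
  from holo_on_add_cmult[OF this assms] show ?thesis by simp
qed

lemma borel_measurable_holo_on:
  assumes "holo_on f \<Omega>" "open \<Omega>" "\<forall>z. z \<notin> \<Omega> \<longrightarrow> f z = 0"
  shows "f \<in> borel_measurable lborel"
proof -
  have "(\<lambda>x. if x \<in> \<Omega> then f x else 0) \<in> borel_measurable borel"
    using assms(1,2) by (intro borel_measurable_continuous_on_if continuous_on_const)
      (auto intro: holo_on_imp_continuous_on)
  moreover have "(\<lambda>x. if x \<in> \<Omega> then f x else 0) = f" using assms(3) by auto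
  ultimately show ?thesis by simp
qed

lemma norm_add_powr_le:
  fixes a b :: "'a::real_normed_vector" assumes "p \<ge> 0"
  shows "norm (a + b) powr p \<le> 2 powr p * (norm a powr p + norm b powr p)"
proof -
  have "norm (a + b) powr p \<le> (2 * max (norm a) (norm b)) powr p"
    using norm_triangle_ineq[of a b] by (intro powr_mono2 assms) auto
  also have "\<dots> = 2 powr p * max (norm a) (norm b) powr p" by (simp add: powr_mult)
  also have "max (norm a) (norm b) powr p \<le> norm a powr p + norm b powr p"
    by (cases "norm a \<le> norm b") (auto simp: max_def)
  finally show ?thesis by (simp add: mult_left_mono)
qed

lemma Lp_int_add_le:
  assumes [measurable]: "f \<in> borel_measurable lborel" "g \<in> borel_measurable lborel" "A \<in> sets lborel"
    and "p \<ge> 0"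
  shows "Lp_int p A (\<lambda>z. f z + g z) \<le> ennreal (2 powr p) * (Lp_int p A f + Lp_int p A g)"
proof -
  have "Lp_int p A (\<lambda>z. f z + g z) \<le> (\<integral>\<^sup>+ z. ennreal (2 powr p) *
      (indicator A z * ennreal (norm (f z) powr p) + indicator A z * ennreal (norm (g z) powr p)) \<partial>lborel)"
    unfolding Lp_int_def
  proof (intro nn_integral_mono)
    fix z
    have "ennreal (norm (f z + g z) powr p)
        \<le> ennreal (2 powr p) * (ennreal (norm (f z) powr p) + ennreal (norm (g z) powr p))"
      using norm_add_powr_le[OF assms(4)]
      by (simp add: ennreal_mult'[symmetric] ennreal_plus[symmetric] del: ennreal_plus)
    then show "indicator A z * ennreal (norm (f z + g z) powr p) \<le> ennreal (2 powr p) *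
      (indicator A z * ennreal (norm (f z) powr p) + indicator A z * ennreal (norm (g z) powr p))"
      by (cases "z \<in> A") auto
  qed
  also have "\<dots> = ennreal (2 powr p) * (Lp_int p A f + Lp_int p A g)"
    unfolding Lp_int_def by (simp add: nn_integral_cmult nn_integral_add)
  finally show ?thesis .
qed

lemma Lp_int_cmult:
  assumes [measurable]: "f \<in> borel_measurable lborel" "A \<in> sets lborel"
  shows "Lp_int p A (\<lambda>z. c * f z) = ennreal (norm c powr p) * Lp_int p A f"
proof -
  have "Lp_int p A (\<lambda>z. c * f z)
      = (\<integral>\<^sup>+ z. ennreal (norm c powr p) * (indicator A z * ennreal (norm (f z) powr p)) \<partial>lborel)"
    unfolding Lp_int_def
    by (intro nn_integral_cong) (auto simp: norm_mult powr_mult ennreal_mult' indicator_def)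
  also have "\<dots> = ennreal (norm c powr p) * Lp_int p A f"
    unfolding Lp_int_def by (simp add: nn_integral_cmult)
  finally show ?thesis .
qed

lemma Lp_int_add_cmult_finite:
  assumes "f \<in> borel_measurable lborel" "g \<in> borel_measurable lborel" "A \<in> sets lborel" "p \<ge> 0"
    and "Lp_int p A f < \<infinity>" "Lp_int p A g < \<infinity>"
  shows "Lp_int p A (\<lambda>z. f z + c * g z) < \<infinity>"
proof -
  have "Lp_int p A (\<lambda>z. f z + c * g z) \<le> ennreal (2 powr p) * (Lp_int p A f + Lp_int p A (\<lambda>z. c * g z))"
    using assms(1-4) by (intro Lp_int_add_le) auto
  also have "\<dots> = ennreal (2 powr p) * (Lp_int p A f + ennreal (norm c powr p) * Lp_int p A g)"
    using assms(2,3) by (simp add: Lp_int_cmult)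
  also have "\<dots> < \<infinity>"
    using assms(5,6) by (simp add: ennreal_mult_less_top ennreal_mult_eq_top_iff)
  finally show ?thesis .
qed

text \<open>Two finite values \<open>s \<noteq> t\<close> would give the difference \<open>(s - t) f\<close> a finite integral.\<close>
lemma Lp_int_add_cmult_infinite:
  assumes f[measurable]: "f \<in> borel_measurable lborel" and [measurable]: "g \<in> borel_measurable lborel"
    and A[measurable]: "A \<in> sets lborel" and p: "p \<ge> 0" and inf: "Lp_int p A f = \<infinity>"
    and fin: "Lp_int p A (\<lambda>z. g z + complex_of_real s * f z) < \<infinity>" and "s \<noteq> t"
  shows "Lp_int p A (\<lambda>z. g z + complex_of_real t * f z) = \<infinity>"
proof (rule ccontr)
  assume "Lp_int p A (\<lambda>z. g z + complex_of_real t * f z) \<noteq> \<infinity>"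
  then have "Lp_int p A (\<lambda>z. (g z + complex_of_real s * f z) + (-1) * (g z + complex_of_real t * f z)) < \<infinity>"
    by (intro Lp_int_add_cmult_finite[OF _ _ A p fin]) (auto simp: less_top)
  moreover have "(\<lambda>z. (g z + complex_of_real s * f z) + (-1) * (g z + complex_of_real t * f z))
      = (\<lambda>z. complex_of_real (s - t) * f z)"
    by (auto simp: algebra_simps)
  moreover have "Lp_int p A (\<lambda>z. complex_of_real (s - t) * f z) = \<infinity>"
    using \<open>s \<noteq> t\<close> by (simp only: Lp_int_cmult[OF f A] inf) (simp add: ennreal_mult_top)
  ultimately show False by simp
qed

lemma countable_Lp_int_add_cmult_finite:
  assumes "f \<in> borel_measurable lborel" "g \<in> borel_measurable lborel" "A \<in> sets lborel"
    and "p \<ge> 0" and "Lp_int p A f = \<infinity>"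
  shows "countable {t. Lp_int p A (\<lambda>z. g z + complex_of_real t * f z) < \<infinity>}"
proof (cases "{t. Lp_int p A (\<lambda>z. g z + complex_of_real t * f z) < \<infinity>} = {}")
  case False
  then obtain s where s: "Lp_int p A (\<lambda>z. g z + complex_of_real s * f z) < \<infinity>" by auto
  have "{t. Lp_int p A (\<lambda>z. g z + complex_of_real t * f z) < \<infinity>} \<subseteq> {s}"
    using Lp_int_add_cmult_infinite[OF assms s] by force
  then show ?thesis by (rule countable_subset) simp
qed simp

lemma Lp_int_mono_set:
  assumes "A \<subseteq> B" shows "Lp_int p A f \<le> Lp_int p B f"
  unfolding Lp_int_def
  by (intro nn_integral_mono) (use assms in \<open>auto simp: indicator_def\<close>)

lemma Lp_int_infinite_mono_set:
  "Lp_int p A f = \<infinity> \<Longrightarrow> A \<subseteq> B \<Longrightarrow> Lp_int p B f = \<infinity>"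
  using Lp_int_mono_set[of A B p f] by (simp add: top_unique)

lemma Lp_norm_nonneg: "Lp_norm p A f \<ge> 0"
  unfolding Lp_norm_def by simp

lemma Lp_int_eq_Lp_norm_powr:
  assumes "Lp_int p A f < \<infinity>" "p > 0"
  shows "Lp_int p A f = ennreal (Lp_norm p A f powr p)"
proof -
  have "Lp_norm p A f powr p = enn2real (Lp_int p A f)"
    unfolding Lp_norm_def using assms(2) by (simp add: powr_powr)
  then show ?thesis using assms(1) by (simp add: ennreal_enn2real_if)
qed

lemma Lp_norm_cmult:
  assumes "f \<in> borel_measurable lborel" "A \<in> sets lborel" "p > 0"
  shows "Lp_norm p A (\<lambda>z. c * f z) = norm c * Lp_norm p A f"
proof -
  have "Lp_norm p A (\<lambda>z. c * f z) = (norm c powr p * enn2real (Lp_int p A f)) powr (1/p)"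
    unfolding Lp_norm_def Lp_int_cmult[OF assms(1,2)] by (simp add: enn2real_mult)
  also have "\<dots> = norm c * Lp_norm p A f"
    unfolding Lp_norm_def using assms(3) by (simp add: powr_mult powr_powr)
  finally show ?thesis .
qed

lemma Lp_int_le_Lp_int_add:
  assumes [measurable]: "f \<in> borel_measurable lborel" "A \<in> sets lborel"
    and "0 \<le> p1" "p1 \<le> p" "p \<le> p2"
  shows "Lp_int p A f \<le> Lp_int p1 A f + Lp_int p2 A f"
proof -
  have "Lp_int p A f \<le> (\<integral>\<^sup>+ z. indicator A z * ennreal (norm (f z) powr p1)
      + indicator A z * ennreal (norm (f z) powr p2) \<partial>lborel)"
    unfolding Lp_int_def
  proof (intro nn_integral_mono)
    fix z
    define x where "x = norm (f z)"
    have "x powr p \<le> x powr p1 + x powr p2"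
    proof (cases "x \<le> 1")
      case True
      then have "x powr p \<le> x powr p1"
        using assms(3,4) unfolding x_def by (cases "x = 0") (auto intro: powr_mono')
      then show ?thesis using powr_ge_zero[of x p2] by linarith
    next
      case False
      then have "x powr p \<le> x powr p2" using powr_mono[of p p2 x] assms(5) by simp
      then show ?thesis using powr_ge_zero[of x p1] by linarith
    qed
    then show "indicator A z * ennreal (norm (f z) powr p)
        \<le> indicator A z * ennreal (norm (f z) powr p1) + indicator A z * ennreal (norm (f z) powr p2)"
      unfolding x_def by (cases "z \<in> A") (auto simp: ennreal_plus[symmetric] simp del: ennreal_plus)
  qed
  also have "\<dots> = Lp_int p1 A f + Lp_int p2 A f"
    unfolding Lp_int_def by (rule nn_integral_add) auto
  finally show ?thesis .
qed

lemma convex_combination_powr_le: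
  fixes x y l p :: real
  assumes "0 \<le> x" "0 \<le> y" "0 \<le> l" "l \<le> 1" "1 \<le> p"
  shows "(l * x + (1 - l) * y) powr p \<le> l * x powr p + (1 - l) * y powr p"
proof -
  have pw: "c powr p \<le> c" if "0 \<le> c" "c \<le> 1" for c :: real
    using powr_mono'[of 1 p c] that assms(5) by simp
  consider "x = 0" | "y = 0" | "x > 0" "y > 0" using assms by linarith
  then show ?thesis
  proof cases
    case 1
    have "((1 - l) * y) powr p = (1 - l) powr p * y powr p" using assms by (simp add: powr_mult)
    also have "\<dots> \<le> (1 - l) * y powr p" by (intro mult_right_mono pw) (use assms in auto)
    finally show ?thesis using 1 assms by simp
  next
    case 2
    have "(l * x) powr p = l powr p * x powr p" using assms by (simp add: powr_mult)
    also have "\<dots> \<le> l * x powr p" by (intro mult_right_mono pw) (use assms in auto)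
    finally show ?thesis using 2 assms by simp
  next
    case 3
    have "(\<lambda>x. x powr p) ((1 - (1 - l)) *\<^sub>R x + (1 - l) *\<^sub>R y)
        \<le> (1 - (1 - l)) * x powr p + (1 - l) * y powr p"
      by (rule convex_onD[OF powr_convex[OF assms(5)]]) (use assms 3 in auto)
    then show ?thesis by simp
  qed
qed

text \<open>The pointwise inequality behind Minkowski's inequality: write \<open>u + v\<close> as
  \<open>(A + B) (\<lambda> u/A + (1 - \<lambda>) v/B)\<close> with \<open>\<lambda> = A/(A + B)\<close> and use convexity of \<open>x\<^sup>p\<close>.\<close>
lemma add_powr_le_weighted:
  fixes u v A B p :: real
  assumes "0 \<le> u" "0 \<le> v" "0 < A" "0 < B" "1 \<le> p"
  shows "(u + v) powr p \<le> (A + B) powr (p - 1) * (A powr (1 - p) * u powr p + B powr (1 - p) * v powr p)"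
proof -
  define l where "l = A / (A + B)"
  have l: "0 \<le> l" "l \<le> 1" "1 - l = B / (A + B)" using assms unfolding l_def by (auto simp: field_simps)
  have "l * (u / A) = u / (A + B)" "(1 - l) * (v / B) = v / (A + B)"
    unfolding l(3) using assms by (simp_all add: l_def)
  then have eq: "u + v = (A + B) * (l * (u / A) + (1 - l) * (v / B))"
    using assms by (simp add: add_divide_distrib[symmetric])
  have "(u + v) powr p = (A + B) powr p * (l * (u / A) + (1 - l) * (v / B)) powr p"
    unfolding eq using assms l by (subst powr_mult) (auto intro!: add_nonneg_nonneg mult_nonneg_nonneg)
  also have "\<dots> \<le> (A + B) powr p * (l * (u / A) powr p + (1 - l) * (v / B) powr p)"
    by (intro mult_left_mono convex_combination_powr_le) (use assms l in auto)
  also have "\<dots> = (A + B) powr (p - 1) * (A powr (1 - p) * u powr p + B powr (1 - p) * v powr p)"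
  proof -
    have summand: "S powr p * (C / S * (w / C) powr p) = S powr (p - 1) * (C powr (1 - p) * w powr p)"
      if "S > 0" "C > 0" "w \<ge> 0" for S C w :: real
    proof -
      have "S powr p * (C / S * (w / C) powr p) = S powr (p - 1) * S * (C / S * (w powr p / C powr p))"
        using that by (simp add: powr_divide powr_diff)
      also have "\<dots> = S powr (p - 1) * (C / C powr p * w powr p)"
        using that by (simp add: field_simps)
      also have "C / C powr p = C powr (1 - p)"
        using that by (simp add: powr_diff)
      finally show ?thesis .
    qed
    show ?thesis
      using summand[of "A + B" A u] summand[of "A + B" B v] assms unfolding l(3) by (simp add: l_def distrib_left)
  qed
  finally show ?thesis .
qed

lemma Lp_int_add_le_weighted:
  assumes [measurable]: "f \<in> borel_measurable lborel" "g \<in> borel_measurable lborel" "A \<in> sets lborel"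
    and p: "1 \<le> p" and fin: "Lp_int p A f < \<infinity>" "Lp_int p A g < \<infinity>" and pos: "a > 0" "b > 0"
  shows "Lp_int p A (\<lambda>z. f z + g z) \<le> ennreal ((a + b) powr (p - 1) *
      (a powr (1 - p) * Lp_norm p A f powr p + b powr (1 - p) * Lp_norm p A g powr p))"
proof -
  define c1 where "c1 = (a + b) powr (p - 1) * a powr (1 - p)"
  define c2 where "c2 = (a + b) powr (p - 1) * b powr (1 - p)"
  have c: "c1 \<ge> 0" "c2 \<ge> 0" unfolding c1_def c2_def by auto
  have "Lp_int p A (\<lambda>z. f z + g z) \<le> (\<integral>\<^sup>+ z. ennreal c1 * (indicator A z * ennreal (norm (f z) powr p))
       + ennreal c2 * (indicator A z * ennreal (norm (g z) powr p)) \<partial>lborel)"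
    unfolding Lp_int_def
  proof (intro nn_integral_mono)
    fix z
    have "norm (f z + g z) powr p \<le> (norm (f z) + norm (g z)) powr p"
      by (intro powr_mono2 norm_triangle_ineq) (use p in auto)
    also have "\<dots> \<le> c1 * norm (f z) powr p + c2 * norm (g z) powr p"
      using add_powr_le_weighted[of "norm (f z)" "norm (g z)" a b p] pos p
      unfolding c1_def c2_def by (simp add: algebra_simps)
    finally show "indicator A z * ennreal (norm (f z + g z) powr p)
        \<le> ennreal c1 * (indicator A z * ennreal (norm (f z) powr p))
          + ennreal c2 * (indicator A z * ennreal (norm (g z) powr p))"
      using c by (cases "z \<in> A")
        (auto simp: ennreal_mult'[symmetric] ennreal_plus[symmetric] simp del: ennreal_plus)
  qed
  also have "\<dots> = ennreal c1 * Lp_int p A f + ennreal c2 * Lp_int p A g"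
    unfolding Lp_int_def by (simp add: nn_integral_cmult nn_integral_add)
  also have "\<dots> = ennreal (c1 * Lp_norm p A f powr p + c2 * Lp_norm p A g powr p)"
    using c fin p
    by (simp add: Lp_int_eq_Lp_norm_powr ennreal_mult'[symmetric] ennreal_plus[symmetric] del: ennreal_plus)
  finally show ?thesis unfolding c1_def c2_def by (simp add: algebra_simps)
qed

text \<open>Minkowski's inequality, from the weighted bound with weights \<open>\<parallel>f\<parallel>\<^sub>p + \<epsilon>/2\<close> and
  \<open>\<parallel>g\<parallel>\<^sub>p + \<epsilon>/2\<close>.\<close>
lemma Lp_norm_triangle:
  assumes [measurable]: "f \<in> borel_measurable lborel" "g \<in> borel_measurable lborel" "A \<in> sets lborel"
    and p: "1 \<le> p" and fin: "Lp_int p A f < \<infinity>" "Lp_int p A g < \<infinity>"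
  shows "Lp_norm p A (\<lambda>z. f z + g z) \<le> Lp_norm p A f + Lp_norm p A g"
proof (rule field_le_epsilon)
  fix e :: real assume e: "e > 0"
  define a where "a = Lp_norm p A f + e / 2"
  define b where "b = Lp_norm p A g + e / 2"
  have pos: "a > 0" "b > 0"
    using e Lp_norm_nonneg[of p A f] Lp_norm_nonneg[of p A g] unfolding a_def b_def by linarith+
  have "a powr (1 - p) * Lp_norm p A f powr p + b powr (1 - p) * Lp_norm p A g powr p
      \<le> a powr (1 - p) * a powr p + b powr (1 - p) * b powr p"
    using e p unfolding a_def b_def by (intro add_mono mult_left_mono powr_mono2 Lp_norm_nonneg) auto
  also have "\<dots> = a + b" using pos by (simp add: powr_add[symmetric])
  finally have "(a + b) powr (p - 1) * (a powr (1 - p) * Lp_norm p A f powr p + b powr (1 - p) * Lp_norm p A g powr p)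
      \<le> (a + b) powr (p - 1) * (a + b)"
    by (intro mult_left_mono) auto
  also have "\<dots> = (a + b) powr p" using pos by (simp add: powr_diff)
  finally have "Lp_int p A (\<lambda>z. f z + g z) \<le> ennreal ((a + b) powr p)"
    using Lp_int_add_le_weighted[OF assms pos] by (meson ennreal_leI order_trans)
  then have "Lp_norm p A (\<lambda>z. f z + g z) \<le> ((a + b) powr p) powr (1 / p)"
    unfolding Lp_norm_def by (intro powr_mono2 enn2real_leI) (use p in auto)
  also have "\<dots> = Lp_norm p A f + Lp_norm p A g + e"
    using pos p unfolding a_def b_def by (simp add: powr_powr)
  finally show "Lp_norm p A (\<lambda>z. f z + g z) \<le> Lp_norm p A f + Lp_norm p A g + e" .
qed

lemma Lp_int_le_of_AE_tendsto:
  assumes [measurable]: "\<And>n. G n \<in> borel_measurable lborel" "h \<in> borel_measurable lborel" "A \<in> sets lborel"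
    and p: "p > 0" and lim: "AE z in lborel. (\<lambda>n. G n z) \<longlonglongrightarrow> h z"
    and bound: "\<And>n. Lp_int p A (G n) \<le> c"
  shows "Lp_int p A h \<le> c"
proof -
  define F where "F n z = indicator A z * ennreal (norm (G n z) powr p)" for n z
  have [measurable]: "F n \<in> borel_measurable lborel" for n unfolding F_def by measurable
  have "AE z in lborel. (\<lambda>n. F n z) \<longlonglongrightarrow> indicator A z * ennreal (norm (h z) powr p)"
    using lim
  proof eventually_elim
    case (elim z)
    have "(\<lambda>n. norm (G n z) powr p) \<longlonglongrightarrow> norm (h z) powr p"
      by (intro tendsto_powr' tendsto_norm elim tendsto_const) (use p in auto)
    then show ?case unfolding F_def by (cases "z \<in> A") auto
  qed
  then have "Lp_int p A h = (\<integral>\<^sup>+ z. liminf (\<lambda>n. F n z) \<partial>lborel)"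
    unfolding Lp_int_def by (intro nn_integral_cong_AE) (auto elim!: AE_mp simp: lim_imp_Liminf)
  also have "\<dots> \<le> liminf (\<lambda>n. integral\<^sup>N lborel (F n))"
    by (rule nn_integral_liminf) simp
  also have "\<dots> \<le> c"
    using bound unfolding F_def Lp_int_def
    by (intro order_trans[OF Liminf_le_Limsup Limsup_bounded]) (auto intro: always_eventually)
  finally show ?thesis .
qed

lemma AE_subseq_of_Lp_norm_tendsto:
  assumes [measurable]: "\<And>k. D k \<in> borel_measurable lborel" "A \<in> sets lborel"
    and p: "p > 0" and fin: "\<And>k. Lp_int p A (D k) < \<infinity>"
    and lim: "(\<lambda>k. Lp_norm p A (D k)) \<longlonglongrightarrow> 0"
  obtains r :: "nat \<Rightarrow> nat" where "strict_mono r" "AE z in lborel. z \<in> A \<longrightarrow> (\<lambda>n. D (r n) z) \<longlonglongrightarrow> 0"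
proof -
  define u where "u k z = indicator A z * norm (D k z) powr p" for k z
  have [measurable]: "u k \<in> borel_measurable lborel" for k unfolding u_def by measurable
  have nn_u: "(\<integral>\<^sup>+ z. ennreal (norm (u k z)) \<partial>lborel) = Lp_int p A (D k)" for k
    unfolding u_def Lp_int_def by (intro nn_integral_cong) (auto simp: indicator_def)
  have int_u: "integrable lborel (u k)" for k
    using fin[of k] nn_u[of k] by (intro integrableI_bounded) auto
  have "(\<integral>z. norm (u k z) \<partial>lborel) = Lp_norm p A (D k) powr p" for k
  proof -
    have "(\<integral>z. norm (u k z) \<partial>lborel) = enn2real (\<integral>\<^sup>+ z. ennreal (norm (u k z)) \<partial>lborel)"
      by (rule integral_eq_nn_integral) auto
    then show ?thesis using p by (simp only: nn_u Lp_int_eq_Lp_norm_powr[OF fin p]) simp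
  qed
  moreover have "(\<lambda>k. Lp_norm p A (D k) powr p) \<longlonglongrightarrow> 0"
    by (rule tendsto_zero_powrI[OF lim tendsto_const]) (use p in \<open>auto simp: Lp_norm_nonneg\<close>)
  ultimately have "(\<lambda>k. \<integral>z. norm (u k z) \<partial>lborel) \<longlonglongrightarrow> 0" by simp
  from tendsto_L1_AE_subseq[OF int_u this] obtain r :: "nat \<Rightarrow> nat"
    where r: "strict_mono r" "AE z in lborel. (\<lambda>n. u (r n) z) \<longlonglongrightarrow> 0" by blast
  have "AE z in lborel. z \<in> A \<longrightarrow> (\<lambda>n. D (r n) z) \<longlonglongrightarrow> 0"
    using r(2)
  proof eventually_elim
    case (elim z)
    show ?case
    proof
      assume "z \<in> A"
      then have "(\<lambda>n. norm (D (r n) z) powr p) \<longlonglongrightarrow> 0"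
        using elim unfolding u_def by simp
      then have "(\<lambda>n. (norm (D (r n) z) powr p) powr (1 / p)) \<longlonglongrightarrow> 0"
        by (rule tendsto_zero_powrI[OF _ tendsto_const]) (use p in auto)
      then show "(\<lambda>n. D (r n) z) \<longlonglongrightarrow> 0"
        using p by (simp add: powr_powr tendsto_norm_zero_iff)
    qed
  qed
  with r(1) show thesis by (rule that)
qed

section \<open>The metric space \<open>\<Inter>\<^sub>p\<^sub><\<^sub>q \<O>L\<^sup>p(\<Omega>)\<close>\<close>

lemma pexp_bounds:
  assumes "q > 1" shows "1 \<le> pexp q (Suc j)" "pexp q (Suc j) < q"
proof -
  have "(q - 1) / (real (Suc j) + 1) \<le> (q - 1) / 1"
    using assms by (intro divide_left_mono) auto
  then show "1 \<le> pexp q (Suc j)" unfolding pexp_def by simp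
  show "pexp q (Suc j) < q" using assms unfolding pexp_def by simp
qed

lemma eventually_le_pexp:
  assumes "p < q" obtains J where "\<And>j. J \<le> j \<Longrightarrow> p \<le> pexp q j"
proof -
  obtain J :: nat where J: "(q - 1) / (q - p) < real J" using reals_Archimedean2 by blast
  have "p \<le> pexp q j" if "J \<le> j" for j
  proof -
    have "q - 1 < (q - p) * real J" using J assms by (simp add: divide_less_eq mult.commute)
    also have "\<dots> \<le> (q - p) * (real j + 1)" using that assms by (intro mult_left_mono) auto
    finally have "(q - 1) / (real j + 1) < q - p" by (simp add: divide_less_eq mult.commute)
    then show ?thesis unfolding pexp_def by simp
  qed
  then show thesis by (rule that)
qed

lemma OLp_belowD:
  assumes "f \<in> OLp_below q \<Omega>" "q > 1"
  shows "holo_on f \<Omega>" "\<And>z. z \<notin> \<Omega> \<Longrightarrow> f z = 0" "\<And>p. 1 \<le> p \<Longrightarrow> p < q \<Longrightarrow> Lp_int p \<Omega> f < \<infinity>"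
  using assms unfolding OLp_below_def OLp_def by auto

lemma OLp_belowI:
  assumes "holo_on f \<Omega>" "\<And>z. z \<notin> \<Omega> \<Longrightarrow> f z = 0" "\<And>p. 1 \<le> p \<Longrightarrow> p < q \<Longrightarrow> Lp_int p \<Omega> f < \<infinity>"
  shows "f \<in> OLp_below q \<Omega>"
  using assms unfolding OLp_below_def OLp_def by auto

lemma zero_in_OLp_below: "(\<lambda>_. 0) \<in> OLp_below q \<Omega>"
  by (rule OLp_belowI) (auto simp: holo_on_def Lp_int_def intro!: exI[of _ "\<lambda>_. 0"])

lemma OLp_below_borel_measurable:
  assumes "f \<in> OLp_below q \<Omega>" "q > 1" "open \<Omega>"
  shows "f \<in> borel_measurable lborel"
  using borel_measurable_holo_on OLp_belowD[OF assms(1,2)] assms(3) by blast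

lemma OLp_below_add_cmult:
  assumes f: "f \<in> OLp_below q \<Omega>" and g: "g \<in> OLp_below q \<Omega>" and q: "q > 1" and \<Omega>: "open \<Omega>"
  shows "(\<lambda>z. f z + c * g z) \<in> OLp_below q \<Omega>"
proof (rule OLp_belowI)
  show "holo_on (\<lambda>z. f z + c * g z) \<Omega>"
    by (intro holo_on_add_cmult OLp_belowD[OF f q] OLp_belowD[OF g q])
  show "f z + c * g z = 0" if "z \<notin> \<Omega>" for z
    using that OLp_belowD[OF f q] OLp_belowD[OF g q] by simp
  show "Lp_int p \<Omega> (\<lambda>z. f z + c * g z) < \<infinity>" if "1 \<le> p" "p < q" for p
    using that \<Omega> OLp_belowD(3)[OF f q] OLp_belowD(3)[OF g q]
    by (intro Lp_int_add_cmult_finite OLp_below_borel_measurable[OF f q \<Omega>]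
        OLp_below_borel_measurable[OF g q \<Omega>]) auto
qed

lemma OLp_below_diff:
  assumes "f \<in> OLp_below q \<Omega>" "g \<in> OLp_below q \<Omega>" "q > 1" "open \<Omega>"
  shows "(\<lambda>z. f z - g z) \<in> OLp_below q \<Omega>"
  using OLp_below_add_cmult[OF assms, of "-1"] by simp

definition OLp_dist_summand ::
    "real \<Rightarrow> (complex ^ 'n) set \<Rightarrow> (complex ^ 'n \<Rightarrow> complex) \<Rightarrow> (complex ^ 'n \<Rightarrow> complex) \<Rightarrow> nat \<Rightarrow> real" where
  "OLp_dist_summand q \<Omega> f g j = (1/2) ^ (Suc j) *
      (Lp_norm (pexp q (Suc j)) \<Omega> (\<lambda>z. f z - g z) / (1 + Lp_norm (pexp q (Suc j)) \<Omega> (\<lambda>z. f z - g z)))"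

lemma OLp_dist_eq_suminf: "OLp_dist q \<Omega> f g = (\<Sum>j. OLp_dist_summand q \<Omega> f g j)"
  unfolding OLp_dist_def OLp_dist_summand_def ..

lemma OLp_dist_summand_bounds:
  "0 \<le> OLp_dist_summand q \<Omega> f g j"
  "OLp_dist_summand q \<Omega> f g j \<le> (1/2) ^ Suc j"
  "OLp_dist_summand q \<Omega> f g j \<le> Lp_norm (pexp q (Suc j)) \<Omega> (\<lambda>z. f z - g z)"
proof -
  define N where "N = Lp_norm (pexp q (Suc j)) \<Omega> (\<lambda>z. f z - g z)"
  have "N \<ge> 0" unfolding N_def by (rule Lp_norm_nonneg)
  then have N: "0 \<le> N / (1 + N)" "N / (1 + N) \<le> 1" "N / (1 + N) \<le> N"
    by (auto simp: field_simps)
  have pow: "(1/2::real) ^ Suc j \<le> 1" by (rule power_le_one) auto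
  show "0 \<le> OLp_dist_summand q \<Omega> f g j"
    unfolding OLp_dist_summand_def N_def[symmetric] by (intro mult_nonneg_nonneg N(1)) simp
  show "OLp_dist_summand q \<Omega> f g j \<le> (1/2) ^ Suc j"
    unfolding OLp_dist_summand_def N_def[symmetric] by (rule mult_left_le[OF N(2)]) simp
  have "(1/2) ^ Suc j * (N / (1 + N)) \<le> 1 * (N / (1 + N))"
    by (rule mult_right_mono[OF pow N(1)])
  then show "OLp_dist_summand q \<Omega> f g j \<le> N"
    unfolding OLp_dist_summand_def N_def[symmetric] using N(3) by linarith
qed

lemma summable_OLp_dist_summand: "summable (OLp_dist_summand q \<Omega> f g)"
proof (rule summable_comparison_test'[of "\<lambda>j. (1/2::real) ^ Suc j" 0])
  show "summable (\<lambda>j. (1/2::real) ^ Suc j)" by (rule sums_summable[OF power_half_series])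
  show "norm (OLp_dist_summand q \<Omega> f g n) \<le> (1/2) ^ Suc n" for n
    using OLp_dist_summand_bounds(1,2)[of q \<Omega> f g n] by simp
qed

lemma OLp_dist_summand_le_OLp_dist: "OLp_dist_summand q \<Omega> f g j \<le> OLp_dist q \<Omega> f g"
proof -
  have "sum (OLp_dist_summand q \<Omega> f g) {j} \<le> (\<Sum>j. OLp_dist_summand q \<Omega> f g j)"
    by (rule sum_le_suminf[OF summable_OLp_dist_summand]) (auto intro: OLp_dist_summand_bounds)
  then show ?thesis unfolding OLp_dist_eq_suminf by simp
qed

lemma OLp_dist_le_partial_sum:
  "OLp_dist q \<Omega> f g \<le> (\<Sum>j<J. Lp_norm (pexp q (Suc j)) \<Omega> (\<lambda>z. f z - g z)) + (1/2) ^ J"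
proof -
  note s = summable_OLp_dist_summand[of q \<Omega> f g]
  have geom: "(\<lambda>n. (1/2::real) ^ J * (1/2) ^ Suc n) sums ((1/2) ^ J * 1)"
    by (intro sums_mult power_half_series)
  have "OLp_dist q \<Omega> f g = (\<Sum>n. OLp_dist_summand q \<Omega> f g (n + J)) + (\<Sum>j<J. OLp_dist_summand q \<Omega> f g j)"
    unfolding OLp_dist_eq_suminf by (rule suminf_split_initial_segment[OF s])
  also have "(\<Sum>n. OLp_dist_summand q \<Omega> f g (n + J)) \<le> (\<Sum>n. (1/2) ^ J * (1/2) ^ Suc n)"
  proof (rule suminf_le[OF _ summable_ignore_initial_segment[OF s] sums_summable[OF geom]])
    fix n
    have "(1/2::real) ^ Suc (n + J) = (1/2) ^ J * (1/2) ^ Suc n" by (simp add: power_add)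
    then show "OLp_dist_summand q \<Omega> f g (n + J) \<le> (1/2) ^ J * (1/2) ^ Suc n"
      using OLp_dist_summand_bounds(2)[of q \<Omega> f g "n + J"] by simp
  qed
  also have "\<dots> = (1/2) ^ J" using geom by (simp add: sums_iff)
  also have "(\<Sum>j<J. OLp_dist_summand q \<Omega> f g j) \<le> (\<Sum>j<J. Lp_norm (pexp q (Suc j)) \<Omega> (\<lambda>z. f z - g z))"
    by (intro sum_mono OLp_dist_summand_bounds(3))
  finally show ?thesis by simp
qed

lemma divide_one_plus_subadditive:
  fixes a b s :: real
  assumes "0 \<le> a" "0 \<le> b" "0 \<le> s" "s \<le> a + b"
  shows "s / (1 + s) \<le> a / (1 + a) + b / (1 + b)"
proof -
  have "s / (1 + s) \<le> (a + b) / (1 + (a + b))"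
    using assms by (simp add: field_simps)
  also have "\<dots> = a / (1 + (a + b)) + b / (1 + (a + b))" by (simp add: add_divide_distrib)
  also have "\<dots> \<le> a / (1 + a) + b / (1 + b)"
    using assms by (intro add_mono divide_left_mono) auto
  finally show ?thesis .
qed

lemma continuous_on_AE_eq_imp_eq:
  fixes f g :: "'a::euclidean_space \<Rightarrow> 'b::real_normed_vector"
  assumes "open \<Omega>" "continuous_on \<Omega> f" "continuous_on \<Omega> g"
    and ae: "AE z in lborel. z \<in> \<Omega> \<longrightarrow> f z = g z" and "x \<in> \<Omega>"
  shows "f x = g x"
proof (rule ccontr)
  assume "f x \<noteq> g x"
  define U where "U = \<Omega> \<inter> (\<lambda>z. f z - g z) -` (- {0})"
  have "open U"
    unfolding U_def by (rule continuous_open_preimage) (use assms(1-3) in \<open>auto intro: continuous_on_diff\<close>)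
  moreover have "U \<noteq> {}" using \<open>f x \<noteq> g x\<close> \<open>x \<in> \<Omega>\<close> unfolding U_def by auto
  moreover have "AE z in lborel. z \<notin> U" using ae by eventually_elim (auto simp: U_def)
  then have "negligible U"
    using AE_iff_null_sets[of U lborel] \<open>open U\<close>
    by (simp add: negligible_iff_null_sets null_sets_completionI)
  ultimately show False by (metis open_not_negligible)
qed

lemma OLp_dist_eq_0_imp_eq:
  assumes \<Omega>: "open \<Omega>" and q: "q > 1" and f: "f \<in> OLp_below q \<Omega>" and g: "g \<in> OLp_below q \<Omega>"
    and "OLp_dist q \<Omega> f g = 0"
  shows "f = g"
proof -
  have "OLp_dist_summand q \<Omega> f g 0 = 0"
    using assms(5) OLp_dist_summand_le_OLp_dist[of q \<Omega> f g 0] OLp_dist_summand_bounds(1)[of q \<Omega> f g 0]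
    by simp
  then have "Lp_norm (pexp q 1) \<Omega> (\<lambda>z. f z - g z) = 0"
    unfolding OLp_dist_summand_def using Lp_norm_nonneg[of _ \<Omega>] by (simp add: add_nonneg_eq_0_iff)
  moreover have fg: "(\<lambda>z. f z - g z) \<in> OLp_below q \<Omega>" by (rule OLp_below_diff[OF f g q \<Omega>])
  moreover have "1 \<le> pexp q 1" "pexp q 1 < q" using pexp_bounds[OF q, of 0] by simp_all
  ultimately have "Lp_int (pexp q 1) \<Omega> (\<lambda>z. f z - g z) = 0"
    using OLp_belowD(3)[OF fg q] Lp_int_eq_Lp_norm_powr[of "pexp q 1" \<Omega> "\<lambda>z. f z - g z"] by simp
  then have "AE z in lborel. indicator \<Omega> z * ennreal (norm (f z - g z) powr pexp q 1) = 0"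
    using \<Omega> OLp_below_borel_measurable[OF f q \<Omega>] OLp_below_borel_measurable[OF g q \<Omega>]
    unfolding Lp_int_def by (subst (asm) nn_integral_0_iff_AE) auto
  then have "AE z in lborel. z \<in> \<Omega> \<longrightarrow> f z = g z"
    by (auto elim!: AE_mp simp: indicator_def)
  then have "f z = g z" if "z \<in> \<Omega>" for z
    using \<Omega> OLp_belowD(1)[OF f q] OLp_belowD(1)[OF g q] that
    by (intro continuous_on_AE_eq_imp_eq holo_on_imp_continuous_on)
  then show "f = g" using OLp_belowD(2)[OF f q] OLp_belowD(2)[OF g q] by (metis ext)
qed

lemma OLp_dist_triangle:
  assumes \<Omega>: "open \<Omega>" and q: "q > 1"
    and fgh: "f \<in> OLp_below q \<Omega>" "g \<in> OLp_below q \<Omega>" "h \<in> OLp_below q \<Omega>"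
  shows "OLp_dist q \<Omega> f h \<le> OLp_dist q \<Omega> f g + OLp_dist q \<Omega> g h"
proof -
  have "OLp_dist_summand q \<Omega> f h j \<le> OLp_dist_summand q \<Omega> f g j + OLp_dist_summand q \<Omega> g h j" for j
  proof -
    define p where "p = pexp q (Suc j)"
    have p: "1 \<le> p" "p < q" unfolding p_def using pexp_bounds[OF q] by auto
    have fg: "(\<lambda>z. f z - g z) \<in> OLp_below q \<Omega>" and gh: "(\<lambda>z. g z - h z) \<in> OLp_below q \<Omega>"
      using OLp_below_diff fgh q \<Omega> by blast+
    have "Lp_norm p \<Omega> (\<lambda>z. (f z - g z) + (g z - h z))
        \<le> Lp_norm p \<Omega> (\<lambda>z. f z - g z) + Lp_norm p \<Omega> (\<lambda>z. g z - h z)"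
      by (rule Lp_norm_triangle[OF OLp_below_borel_measurable[OF fg q \<Omega>]
          OLp_below_borel_measurable[OF gh q \<Omega>] _ p(1) OLp_belowD(3)[OF fg q p] OLp_belowD(3)[OF gh q p]])
        (use \<Omega> in simp)
    then have "Lp_norm p \<Omega> (\<lambda>z. f z - h z)
        \<le> Lp_norm p \<Omega> (\<lambda>z. f z - g z) + Lp_norm p \<Omega> (\<lambda>z. g z - h z)"
      by simp
    then show ?thesis
      unfolding OLp_dist_summand_def p_def[symmetric] distrib_left[symmetric]
      by (intro mult_left_mono divide_one_plus_subadditive Lp_norm_nonneg) simp_all
  qed
  then have "OLp_dist q \<Omega> f h \<le> (\<Sum>j. OLp_dist_summand q \<Omega> f g j + OLp_dist_summand q \<Omega> g h j)"
    unfolding OLp_dist_eq_suminf by (intro suminf_le summable_add summable_OLp_dist_summand)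
  also have "\<dots> = OLp_dist q \<Omega> f g + OLp_dist q \<Omega> g h"
    unfolding OLp_dist_eq_suminf by (intro suminf_add[symmetric] summable_OLp_dist_summand)
  finally show ?thesis .
qed

lemma Metric_space_OLp_dist:
  fixes \<Omega> :: "(complex ^ 'n) set"
  assumes "open \<Omega>" "q > 1"
  shows "Metric_space (OLp_below q \<Omega>) (OLp_dist q \<Omega>)"
proof
  fix f g :: "complex ^ 'n \<Rightarrow> complex"
  show "0 \<le> OLp_dist q \<Omega> f g" unfolding OLp_dist_eq_suminf
    by (intro suminf_nonneg summable_OLp_dist_summand OLp_dist_summand_bounds)
  have "Lp_int p \<Omega> (\<lambda>z. f z - g z) = Lp_int p \<Omega> (\<lambda>z. g z - f z)" for p
    unfolding Lp_int_def by (simp add: norm_minus_commute)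
  then show "OLp_dist q \<Omega> f g = OLp_dist q \<Omega> g f"
    unfolding OLp_dist_def Lp_norm_def by simp
  assume "f \<in> OLp_below q \<Omega>" "g \<in> OLp_below q \<Omega>"
  moreover have "OLp_dist_summand q \<Omega> f f = (\<lambda>j. 0)"
    unfolding OLp_dist_summand_def Lp_norm_def Lp_int_def by (simp add: fun_eq_iff)
  ultimately show "OLp_dist q \<Omega> f g = 0 \<longleftrightarrow> f = g"
    using OLp_dist_eq_0_imp_eq[OF assms] unfolding OLp_dist_eq_suminf by auto
qed (use OLp_dist_triangle assms in blast)

section \<open>A dense \<open>G\<^sub>\<delta>\<close> set\<close>

lemma OLp_dist_tendsto_imp_Lp_norm_tendsto:
  assumes "(\<lambda>k. OLp_dist q \<Omega> f (G k)) \<longlonglongrightarrow> 0"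
  shows "(\<lambda>k. Lp_norm (pexp q 1) \<Omega> (\<lambda>z. f z - G k z)) \<longlonglongrightarrow> 0"
proof -
  define N where "N k = Lp_norm (pexp q 1) \<Omega> (\<lambda>z. f z - G k z)" for k
  define \<phi> where "\<phi> k = N k / (1 + N k)" for k
  have N: "1 + N k > 0" for k unfolding N_def by (simp add: add_pos_nonneg Lp_norm_nonneg)
  have upper: "(1/2) ^ Suc 0 * \<phi> k \<le> OLp_dist q \<Omega> f (G k)" for k
    using OLp_dist_summand_le_OLp_dist[of q \<Omega> f "G k" 0]
    unfolding \<phi>_def N_def OLp_dist_summand_def by simp
  have lower: "0 \<le> \<phi> k" for k
    using N[of k] unfolding \<phi>_def N_def by (simp add: Lp_norm_nonneg)
  have "\<phi> \<longlonglongrightarrow> 0"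
  proof (rule tendsto_sandwich[OF _ _ tendsto_const tendsto_mult_right_zero[OF assms, of 2]])
    show "\<forall>\<^sub>F k in sequentially. 0 \<le> \<phi> k" using lower by simp
    have "\<phi> k \<le> 2 * OLp_dist q \<Omega> f (G k)" for k using upper[of k] by simp
    then show "\<forall>\<^sub>F k in sequentially. \<phi> k \<le> 2 * OLp_dist q \<Omega> f (G k)" by simp
  qed
  then have "(\<lambda>k. \<phi> k / (1 - \<phi> k)) \<longlonglongrightarrow> 0 / (1 - 0)"
    by (intro tendsto_divide tendsto_diff tendsto_const) simp_all
  moreover have "\<phi> k / (1 - \<phi> k) = N k" for k
    using N[of k] unfolding \<phi>_def by (simp add: field_simps)
  ultimately show ?thesis unfolding N_def by simp
qed

lemma OLp_dist_tendsto_imp_AE_subseq: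
  assumes \<Omega>: "open \<Omega>" and q: "q > 1" and G: "\<And>k. G k \<in> OLp_below q \<Omega>" and h: "h \<in> OLp_below q \<Omega>"
    and lim: "(\<lambda>k. OLp_dist q \<Omega> h (G k)) \<longlonglongrightarrow> 0"
  obtains r :: "nat \<Rightarrow> nat" where "strict_mono r" "AE z in lborel. (\<lambda>n. G (r n) z) \<longlonglongrightarrow> h z"
proof -
  define p where "p = pexp q 1"
  have p: "1 \<le> p" "p < q" unfolding p_def using pexp_bounds[OF q, of 0] by simp_all
  define D where "D k = (\<lambda>z. h z - G k z)" for k
  have D: "D k \<in> OLp_below q \<Omega>" for k unfolding D_def by (rule OLp_below_diff[OF h G q \<Omega>])
  have D_lim: "(\<lambda>k. Lp_norm p \<Omega> (D k)) \<longlonglongrightarrow> 0"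
    unfolding p_def D_def using lim by (rule OLp_dist_tendsto_imp_Lp_norm_tendsto)
  obtain r :: "nat \<Rightarrow> nat" where mono: "strict_mono r"
    and r: "AE z in lborel. z \<in> \<Omega> \<longrightarrow> (\<lambda>n. D (r n) z) \<longlonglongrightarrow> 0"
    by (rule AE_subseq_of_Lp_norm_tendsto[OF OLp_below_borel_measurable[OF D q \<Omega>] _ _
          OLp_belowD(3)[OF D q p] D_lim]) (use \<Omega> p in auto)
  have "AE z in lborel. (\<lambda>n. G (r n) z) \<longlonglongrightarrow> h z"
    using r
  proof eventually_elim
    case (elim z)
    show ?case
    proof (cases "z \<in> \<Omega>")
      case True
      then have "(\<lambda>n. h z - D (r n) z) \<longlonglongrightarrow> h z - 0" using elim by (intro tendsto_diff) auto
      then show ?thesis unfolding D_def by simp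
    next
      case False
      then show ?thesis using OLp_belowD(2)[OF h q] OLp_belowD(2)[OF G q] by simp
    qed
  qed
  with mono show thesis by (rule that)
qed

lemma closedin_Lp_int_le:
  fixes \<Omega> :: "(complex ^ 'n) set"
  assumes \<Omega>: "open \<Omega>" and q: "q > 1" and qt: "qt > 0" and A: "A \<in> sets lborel"
  shows "closedin (OLp_top q \<Omega>) {g \<in> OLp_below q \<Omega>. Lp_int qt A g \<le> c}"
proof -
  interpret OLp: Metric_space "OLp_below q \<Omega>" "OLp_dist q \<Omega>" by (rule Metric_space_OLp_dist[OF \<Omega> q])
  show ?thesis unfolding OLp_top_def OLp.metric_closedin_iff_sequentially_closed
  proof (intro conjI allI impI)
    fix G h assume "range G \<subseteq> {g \<in> OLp_below q \<Omega>. Lp_int qt A g \<le> c} \<and> limitin OLp.mtopology G h sequentially"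
    then have G: "\<And>k. G k \<in> OLp_below q \<Omega>" "\<And>k. Lp_int qt A (G k) \<le> c"
      and h: "h \<in> OLp_below q \<Omega>" and lim: "(\<lambda>k. OLp_dist q \<Omega> h (G k)) \<longlonglongrightarrow> 0"
      unfolding OLp.limitin_metric_dist_null by (auto simp: OLp.commute)
    obtain r :: "nat \<Rightarrow> nat" where r: "AE z in lborel. (\<lambda>n. G (r n) z) \<longlonglongrightarrow> h z"
      using OLp_dist_tendsto_imp_AE_subseq[OF \<Omega> q G(1) h lim] by blast
    have "Lp_int qt A h \<le> c"
      by (rule Lp_int_le_of_AE_tendsto[where G = "\<lambda>n. G (r n)", OF _ _ A qt r G(2)])
        (use OLp_below_borel_measurable[OF _ q \<Omega>] G(1) h in blast)+
    with h show "h \<in> {g \<in> OLp_below q \<Omega>. Lp_int qt A g \<le> c}" by simp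
  qed auto
qed

lemma openin_Lp_int_greater:
  fixes \<Omega> :: "(complex ^ 'n) set"
  assumes "open \<Omega>" "q > 1" "qt > 0" "A \<in> sets lborel"
  shows "openin (OLp_top q \<Omega>) {g \<in> OLp_below q \<Omega>. c < Lp_int qt A g}"
proof -
  interpret OLp: Metric_space "OLp_below q \<Omega>" "OLp_dist q \<Omega>" by (rule Metric_space_OLp_dist[OF assms(1,2)])
  have top: "topspace (OLp_top q \<Omega>) = OLp_below q \<Omega>" unfolding OLp_top_def by simp
  have "topspace (OLp_top q \<Omega>) - {g \<in> OLp_below q \<Omega>. c < Lp_int qt A g}
      = {g \<in> OLp_below q \<Omega>. Lp_int qt A g \<le> c}"
    unfolding top by auto
  then show ?thesis
    unfolding openin_closedin_eq using closedin_Lp_int_le[OF assms] top by auto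
qed

definition frontier_blowup :: "real \<Rightarrow> real \<Rightarrow> (complex ^ 'n) set \<Rightarrow> (complex ^ 'n \<Rightarrow> complex) set" where
  "frontier_blowup q qt \<Omega> =
     {g \<in> OLp_below q \<Omega>. \<forall>\<zeta>\<in>frontier \<Omega>. \<forall>\<epsilon>>0. Lp_int qt (ball \<zeta> \<epsilon> \<inter> \<Omega>) g = \<infinity>}"

lemma frontier_blowup_iff_basis:
  assumes B: "topological_basis B"
  shows "g \<in> frontier_blowup q qt \<Omega> \<longleftrightarrow>
    g \<in> OLp_below q \<Omega> \<and> (\<forall>C\<in>B. C \<inter> frontier \<Omega> \<noteq> {} \<longrightarrow> Lp_int qt (C \<inter> \<Omega>) g = \<infinity>)"
proof (intro iffI conjI ballI impI)
  assume g: "g \<in> frontier_blowup q qt \<Omega>"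
  then show "g \<in> OLp_below q \<Omega>" unfolding frontier_blowup_def by simp
  fix C assume "C \<in> B" "C \<inter> frontier \<Omega> \<noteq> {}"
  then obtain \<zeta> \<epsilon> where "\<zeta> \<in> frontier \<Omega>" "\<epsilon> > 0" "ball \<zeta> \<epsilon> \<subseteq> C"
    using topological_basis_open[OF B] open_contains_ball by blast
  with g have "Lp_int qt (ball \<zeta> \<epsilon> \<inter> \<Omega>) g = \<infinity>" unfolding frontier_blowup_def by simp
  then show "Lp_int qt (C \<inter> \<Omega>) g = \<infinity>"
    by (rule Lp_int_infinite_mono_set) (use \<open>ball \<zeta> \<epsilon> \<subseteq> C\<close> in auto)
next
  assume g: "g \<in> OLp_below q \<Omega> \<and> (\<forall>C\<in>B. C \<inter> frontier \<Omega> \<noteq> {} \<longrightarrow> Lp_int qt (C \<inter> \<Omega>) g = \<infinity>)"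
  have "Lp_int qt (ball \<zeta> \<epsilon> \<inter> \<Omega>) g = \<infinity>" if "\<zeta> \<in> frontier \<Omega>" "\<epsilon> > 0" for \<zeta> \<epsilon>
  proof -
    obtain C where "C \<in> B" "\<zeta> \<in> C" "C \<subseteq> ball \<zeta> \<epsilon>"
      using topological_basisE[OF B, of "ball \<zeta> \<epsilon>" \<zeta>] \<open>\<epsilon> > 0\<close> by auto
    with g that have "Lp_int qt (C \<inter> \<Omega>) g = \<infinity>" by auto
    then show ?thesis
      by (rule Lp_int_infinite_mono_set) (use \<open>C \<subseteq> ball \<zeta> \<epsilon>\<close> in auto)
  qed
  with g show "g \<in> frontier_blowup q qt \<Omega>" unfolding frontier_blowup_def by simp
qed

lemma ennreal_eq_infinity_iff_of_nat_less: "x = \<infinity> \<longleftrightarrow> (\<forall>m::nat. of_nat m < x)" for x :: ennreal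
proof
  assume less: "\<forall>m::nat. of_nat m < x"
  show "x = \<infinity>"
  proof (rule ccontr)
    assume "x \<noteq> \<infinity>"
    then have "x < top" by (simp add: less_top[symmetric])
    then obtain m :: nat where "x < of_nat m" using ennreal_Ex_less_of_nat by blast
    with less show False using less_asym by blast
  qed
qed (simp add: of_nat_less_top)

lemma gdelta_in_frontier_blowup:
  fixes \<Omega> :: "(complex ^ 'n) set"
  assumes \<Omega>: "open \<Omega>" and q: "q > 1" and qt: "qt > 0"
  shows "gdelta_in (OLp_top q \<Omega>) (frontier_blowup q qt \<Omega>)"
proof -
  interpret OLp: Metric_space "OLp_below q \<Omega>" "OLp_dist q \<Omega>" by (rule Metric_space_OLp_dist[OF \<Omega> q])
  have top: "topspace (OLp_top q \<Omega>) = OLp_below q \<Omega>" unfolding OLp_top_def by simp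
  obtain B :: "(complex ^ 'n) set set" where B: "countable B" "topological_basis B"
    using ex_countable_basis by blast
  define U where "U = (\<lambda>(C, m::nat). {g \<in> OLp_below q \<Omega>. of_nat m < Lp_int qt (C \<inter> \<Omega>) g})
      ` ({C \<in> B. C \<inter> frontier \<Omega> \<noteq> {}} \<times> UNIV)"
  have "countable U" unfolding U_def using B(1) by auto
  moreover have "U \<subseteq> Collect (openin (OLp_top q \<Omega>))"
  proof
    fix V assume "V \<in> U"
    then obtain C m where "C \<in> B" and V: "V = {g \<in> OLp_below q \<Omega>. of_nat m < Lp_int qt (C \<inter> \<Omega>) g}"
      unfolding U_def by auto
    then have "C \<inter> \<Omega> \<in> sets lborel" using topological_basis_open[OF B(2)] \<Omega> by auto
    then show "V \<in> Collect (openin (OLp_top q \<Omega>))"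
      unfolding V using openin_Lp_int_greater[OF \<Omega> q qt] by simp
  qed
  ultimately have "(countable intersection_of openin (OLp_top q \<Omega>)) (\<Inter>U)"
    unfolding intersection_of_def by blast
  moreover have "topspace (OLp_top q \<Omega>) \<inter> \<Inter>U = frontier_blowup q qt \<Omega>"
  proof (rule set_eqI)
    fix g
    have "g \<in> topspace (OLp_top q \<Omega>) \<inter> \<Inter>U \<longleftrightarrow> g \<in> OLp_below q \<Omega> \<and>
        (\<forall>C\<in>B. C \<inter> frontier \<Omega> \<noteq> {} \<longrightarrow> (\<forall>m::nat. of_nat m < Lp_int qt (C \<inter> \<Omega>) g))"
      unfolding top U_def by blast
    then show "g \<in> topspace (OLp_top q \<Omega>) \<inter> \<Inter>U \<longleftrightarrow> g \<in> frontier_blowup q qt \<Omega>"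
      unfolding frontier_blowup_iff_basis[OF B(2)] ennreal_eq_infinity_iff_of_nat_less .
  qed
  ultimately show ?thesis unfolding gdelta_in_def relative_to_def by blast
qed

lemma add_cmult_in_frontier_blowup:
  fixes \<Omega> :: "(complex ^ 'n) set"
  assumes \<Omega>: "open \<Omega>" and q: "q > 1" and qt: "qt > 0"
    and h: "h \<in> frontier_blowup q qt \<Omega>" and g: "g \<in> OLp_below q \<Omega>"
  shows "countable {t. (\<lambda>z. g z + complex_of_real t * h z) \<notin> frontier_blowup q qt \<Omega>}"
proof -
  obtain B :: "(complex ^ 'n) set set" where B: "countable B" "topological_basis B"
    using ex_countable_basis by blast
  define B' where "B' = {C \<in> B. C \<inter> frontier \<Omega> \<noteq> {}}"
  have h': "h \<in> OLp_below q \<Omega>" using h unfolding frontier_blowup_def by simp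
  have g_meas: "g \<in> borel_measurable lborel" and h_meas: "h \<in> borel_measurable lborel"
    using OLp_below_borel_measurable[OF _ q \<Omega>] g h' by blast+
  define bad where "bad C = {t. Lp_int qt (C \<inter> \<Omega>) (\<lambda>z. g z + complex_of_real t * h z) < \<infinity>}" for C
  have "countable (bad C)" if C: "C \<in> B'" for C
    unfolding bad_def
  proof (rule countable_Lp_int_add_cmult_finite[OF h_meas g_meas])
    show "C \<inter> \<Omega> \<in> sets lborel" using topological_basis_open[OF B(2)] C \<Omega> by (auto simp: B'_def)
    show "Lp_int qt (C \<inter> \<Omega>) h = \<infinity>" using h C by (simp add: frontier_blowup_iff_basis[OF B(2)] B'_def)
  qed (use qt in simp)
  moreover have "countable B'" unfolding B'_def using B(1) by simp
  ultimately have "countable (\<Union>C\<in>B'. bad C)" by (intro countable_UN)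
  moreover have "{t. (\<lambda>z. g z + complex_of_real t * h z) \<notin> frontier_blowup q qt \<Omega>} \<subseteq> (\<Union>C\<in>B'. bad C)"
  proof
    fix t assume "t \<in> {t. (\<lambda>z. g z + complex_of_real t * h z) \<notin> frontier_blowup q qt \<Omega>}"
    then obtain C where "C \<in> B'" "Lp_int qt (C \<inter> \<Omega>) (\<lambda>z. g z + complex_of_real t * h z) \<noteq> \<infinity>"
      using OLp_below_add_cmult[OF g h' q \<Omega>] by (auto simp: frontier_blowup_iff_basis[OF B(2)] B'_def)
    then show "t \<in> (\<Union>C\<in>B'. bad C)" unfolding bad_def by (auto simp: less_top)
  qed
  ultimately show ?thesis by (rule countable_subset[rotated])
qed

lemma OLp_dist_add_cmult_less:
  assumes \<Omega>: "open \<Omega>" and q: "q > 1" and h: "h \<in> OLp_below q \<Omega>" and r: "r > 0"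
  obtains \<delta> where "\<delta> > 0" "\<And>t. 0 < t \<Longrightarrow> t < \<delta> \<Longrightarrow> OLp_dist q \<Omega> g (\<lambda>z. g z + complex_of_real t * h z) < r"
proof -
  obtain J where J: "(1/2::real) ^ J < r / 2" using real_arch_pow_inv[of "r / 2" "1/2"] r by auto
  define Q where "Q = (\<Sum>j<J. Lp_norm (pexp q (Suc j)) \<Omega> h)"
  have Q: "Q \<ge> 0" unfolding Q_def by (intro sum_nonneg Lp_norm_nonneg)
  define \<delta> where "\<delta> = r / (2 * (Q + 1))"
  have "OLp_dist q \<Omega> g (\<lambda>z. g z + complex_of_real t * h z) < r" if t: "0 < t" "t < \<delta>" for t
  proof -
    have "(\<lambda>z. g z - (g z + complex_of_real t * h z)) = (\<lambda>z. complex_of_real (- t) * h z)" by auto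
    moreover have "Lp_norm (pexp q (Suc j)) \<Omega> (\<lambda>z. complex_of_real (- t) * h z)
        = t * Lp_norm (pexp q (Suc j)) \<Omega> h" for j
    proof -
      have "Lp_norm (pexp q (Suc j)) \<Omega> (\<lambda>z. complex_of_real (- t) * h z)
          = norm (complex_of_real (- t)) * Lp_norm (pexp q (Suc j)) \<Omega> h"
        using pexp_bounds(1)[OF q, of j] \<Omega>
        by (intro Lp_norm_cmult OLp_below_borel_measurable[OF h q \<Omega>]) auto
      then show ?thesis using t by simp
    qed
    ultimately have "OLp_dist q \<Omega> g (\<lambda>z. g z + complex_of_real t * h z) \<le> t * Q + (1/2) ^ J"
      using OLp_dist_le_partial_sum[of q \<Omega> g "\<lambda>z. g z + complex_of_real t * h z" J]
      unfolding Q_def sum_distrib_left by simp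
    also have "t * Q \<le> \<delta> * Q" using t Q by (intro mult_right_mono) auto
    also have "\<delta> * Q < r / 2" unfolding \<delta>_def using Q r by (simp add: field_simps)
    finally show ?thesis using J by linarith
  qed
  moreover have "\<delta> > 0" unfolding \<delta>_def using r Q by simp
  ultimately show thesis using that by blast
qed

lemma closure_of_frontier_blowup:
  fixes \<Omega> :: "(complex ^ 'n) set"
  assumes \<Omega>: "open \<Omega>" and q: "q > 1" and qt: "qt > 0" and h: "h \<in> frontier_blowup q qt \<Omega>"
  shows "OLp_top q \<Omega> closure_of frontier_blowup q qt \<Omega> = topspace (OLp_top q \<Omega>)"
proof -
  interpret OLp: Metric_space "OLp_below q \<Omega>" "OLp_dist q \<Omega>" by (rule Metric_space_OLp_dist[OF \<Omega> q])
  have h': "h \<in> OLp_below q \<Omega>" using h unfolding frontier_blowup_def by simp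
  have "\<exists>y\<in>frontier_blowup q qt \<Omega>. y \<in> OLp.mball g r" if g: "g \<in> OLp_below q \<Omega>" and "r > 0" for g r
  proof -
    obtain \<delta> where \<delta>: "\<delta> > 0"
      and close: "\<And>t. 0 < t \<Longrightarrow> t < \<delta> \<Longrightarrow> OLp_dist q \<Omega> g (\<lambda>z. g z + complex_of_real t * h z) < r"
      using OLp_dist_add_cmult_less[OF \<Omega> q h' \<open>r > 0\<close>] by blast
    have "\<not> {0<..<\<delta>} \<subseteq> {t. (\<lambda>z. g z + complex_of_real t * h z) \<notin> frontier_blowup q qt \<Omega>}"
      using add_cmult_in_frontier_blowup[OF \<Omega> q qt h g] uncountable_open_interval[of 0 \<delta>] \<delta>
        countable_subset by blast
    then obtain t where t: "0 < t" "t < \<delta>" "(\<lambda>z. g z + complex_of_real t * h z) \<in> frontier_blowup q qt \<Omega>"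
      by auto
    then have "(\<lambda>z. g z + complex_of_real t * h z) \<in> OLp.mball g r"
      using g close[OF t(1,2)] unfolding frontier_blowup_def by simp
    with t(3) show ?thesis by blast
  qed
  then show ?thesis
    unfolding OLp_top_def OLp.metric_closure_of OLp.topspace_mtopology by auto
qed

section \<open>Compact exhaustions and series\<close>

definition exhaustion :: "'a::metric_space set \<Rightarrow> nat \<Rightarrow> 'a set" where
  "exhaustion U m = {z. inverse (real (Suc m)) \<le> infdist z (- U)}"

lemma exhaustion_subset: "exhaustion U m \<subseteq> U"
proof
  fix z assume z: "z \<in> exhaustion U m"
  show "z \<in> U"
  proof (rule ccontr)
    assume "z \<notin> U"
    then have "infdist z (- U) = 0" by simp
    then show False using z unfolding exhaustion_def by simp
  qed
qed

lemma compact_exhaustion: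
  fixes U :: "'a::heine_borel set"
  assumes "bounded U" shows "compact (exhaustion U m)"
proof -
  have "closed (exhaustion U m)" unfolding exhaustion_def
    by (intro closed_Collect_le continuous_intros)
  then show ?thesis
    using bounded_subset[OF assms exhaustion_subset] by (simp add: compact_eq_bounded_closed)
qed

lemma exhaustion_mono: "m \<le> m' \<Longrightarrow> exhaustion U m \<subseteq> exhaustion U m'"
  unfolding exhaustion_def by (auto elim!: order_trans[rotated] intro!: le_imp_inverse_le)

lemma cball_subset_exhaustion:
  fixes U :: "'a::{real_normed_vector, perfect_space} set"
  assumes "bounded U" "open U" "z \<in> U"
  obtains r m where "r > 0" "cball z r \<subseteq> exhaustion U m"
proof -
  have "- U \<noteq> {}"
  proof
    assume "- U = {}"
    then have "U = UNIV" by auto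
    with assms(1) show False by simp
  qed
  then have d: "infdist z (- U) > 0"
    using assms(2,3) by (intro infdist_pos_not_in_closed) auto
  define r where "r = infdist z (- U) / 2"
  have r: "r > 0" unfolding r_def using d by simp
  obtain m where m: "inverse (real (Suc m)) < r" using reals_Archimedean[OF r] by blast
  have "cball z r \<subseteq> exhaustion U m"
  proof
    fix y assume "y \<in> cball z r"
    then have "infdist z (- U) \<le> infdist y (- U) + r"
      using infdist_triangle[of z "- U" y] by (simp add: dist_commute)
    then show "y \<in> exhaustion U m" unfolding exhaustion_def r_def using m r_def by simp
  qed
  with r show thesis by (rule that)
qed

lemma Lp_int_infinite_imp_compact_greater:
  assumes "bounded U" "open U" and [measurable]: "G \<in> borel_measurable lborel"
    and inf: "Lp_int p U G = \<infinity>"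
  obtains K where "compact K" "K \<subseteq> U" "ennreal c < Lp_int p K G"
proof -
  define f where "f m z = indicator (exhaustion U m) z * ennreal (norm (G z) powr p)" for m z
  have [measurable]: "exhaustion U m \<in> sets lborel" for m
    using compact_exhaustion[OF assms(1)] by (simp add: compact_imp_closed)
  have f_meas: "f m \<in> borel_measurable lborel" for m unfolding f_def by measurable
  have inc: "incseq f"
    unfolding incseq_def f_def le_fun_def
    by (auto intro!: mult_right_mono simp: indicator_def dest: exhaustion_mono[of _ _ U])
  have "(SUP m. f m z) = indicator U z * ennreal (norm (G z) powr p)" for z
  proof (cases "z \<in> U")
    case True
    then obtain r m where "r > 0" "cball z r \<subseteq> exhaustion U m"
      using cball_subset_exhaustion[OF assms(1,2)] by blast
    then have "z \<in> exhaustion U m" by auto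
    then have "f m z = indicator U z * ennreal (norm (G z) powr p)"
      using True unfolding f_def by simp
    moreover have "f m' z \<le> indicator U z * ennreal (norm (G z) powr p)" for m'
      using exhaustion_subset[of U m'] unfolding f_def
      by (cases "z \<in> exhaustion U m'") (auto simp: indicator_def)
    ultimately show ?thesis by (metis SUP_upper UNIV_I antisym SUP_least)
  next
    case False
    then have "f m z = 0" for m using exhaustion_subset[of U m] unfolding f_def by (auto simp: indicator_def)
    then show ?thesis using False by simp
  qed
  then have "(SUP m. Lp_int p (exhaustion U m) G) = Lp_int p U G"
    unfolding Lp_int_def f_def[symmetric] using nn_integral_monotone_convergence_SUP[OF inc f_meas] by simp
  then have sup_top: "(SUP m. Lp_int p (exhaustion U m) G) = top" using inf by simp
  have "ennreal c < (SUP m. Lp_int p (exhaustion U m) G)" unfolding sup_top by simp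
  then obtain m where "ennreal c < Lp_int p (exhaustion U m) G" by (auto simp: less_SUP_iff)
  then show thesis using that compact_exhaustion[OF assms(1)] exhaustion_subset by blast
qed

lemma geometric_tail_bound:
  fixes b :: "nat \<Rightarrow> 'a::banach"
  assumes b: "\<And>j. j \<ge> n \<Longrightarrow> norm (b j) \<le> C * (1/2) ^ j" and C: "C \<ge> 0"
  shows "summable b" "norm (suminf b - (\<Sum>j<n. b j)) \<le> 2 * C * (1/2) ^ n"
proof -
  have geom: "(\<lambda>i. C * (1/2) ^ n * (1/2::real) ^ i) sums (C * (1/2) ^ n * 2)"
    using sums_mult[OF geometric_sums[of "1/2::real"], of "C * (1/2) ^ n"] by simp
  have norm_sum: "summable (\<lambda>j. norm (b j))"
    by (rule summable_comparison_test'[of "\<lambda>j. C * (1/2::real) ^ j" n])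
       (use b in \<open>auto intro!: summable_mult summable_geometric\<close>)
  then show sb: "summable b" by (rule summable_norm_cancel)
  have "suminf b - (\<Sum>j<n. b j) = (\<Sum>i. b (i + n))"
    using suminf_split_initial_segment[OF sb, of n] by simp
  also have "norm \<dots> \<le> (\<Sum>i. norm (b (i + n)))"
    by (rule summable_norm) (use summable_ignore_initial_segment[OF norm_sum, of n] in simp)
  also have "\<dots> \<le> (\<Sum>i. C * (1/2) ^ n * (1/2) ^ i)"
  proof (rule suminf_le)
    show "summable (\<lambda>i. norm (b (i + n)))" using summable_ignore_initial_segment[OF norm_sum] .
    show "summable (\<lambda>i. C * (1/2::real) ^ n * (1/2) ^ i)" using geom by (rule sums_summable)
    show "norm (b (i + n)) \<le> C * (1/2) ^ n * (1/2) ^ i" for i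
      using b[of "i + n"] by (simp add: power_add mult_ac)
  qed
  also have "\<dots> = 2 * C * (1/2) ^ n" using geom by (simp add: sums_iff)
  finally show "norm (suminf b - (\<Sum>j<n. b j)) \<le> 2 * C * (1/2) ^ n" .
qed

text \<open>If the right-hand side is \<open>s\<close>, then \<open>a\<^sub>j \<le> 2\<^sup>-\<^sup>j\<^sup>-\<^sup>1 s\<^sup>1\<^sup>/\<^sup>p\<close> for every \<open>j\<close>; no convexity is needed.\<close>
lemma suminf_powr_le_weighted:
  fixes a :: "nat \<Rightarrow> real"
  assumes a: "\<And>j. a j \<ge> 0" and "summable a" and p: "p > 0"
  shows "ennreal ((\<Sum>j. a j) powr p) \<le> (\<Sum>j. ennreal ((2 ^ Suc j * a j) powr p))"
proof (cases "(\<Sum>j. ennreal ((2 ^ Suc j * a j) powr p)) = \<infinity>")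
  case False
  define s where "s = enn2real (\<Sum>j. ennreal ((2 ^ Suc j * a j) powr p))"
  have s: "(\<Sum>j. ennreal ((2 ^ Suc j * a j) powr p)) = ennreal s" "s \<ge> 0"
    using False unfolding s_def by (auto simp: less_top ennreal_enn2real_if)
  have "a j \<le> (1/2) ^ Suc j * s powr (1 / p)" for j
  proof -
    have "sum (\<lambda>j. ennreal ((2 ^ Suc j * a j) powr p)) {j} \<le> (\<Sum>j. ennreal ((2 ^ Suc j * a j) powr p))"
      by (rule sum_le_suminf) auto
    then have "ennreal ((2 ^ Suc j * a j) powr p) \<le> ennreal s" using s(1) by simp
    then have "(2 ^ Suc j * a j) powr p \<le> s" using s(2) by simp
    then have "((2 ^ Suc j * a j) powr p) powr (1 / p) \<le> s powr (1 / p)"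
      by (intro powr_mono2) (use p a in auto)
    then have "2 ^ Suc j * a j \<le> s powr (1 / p)" using p a[of j] by (simp add: powr_powr)
    then show ?thesis by (simp add: field_simps)
  qed
  then have "(\<Sum>j. a j) \<le> (\<Sum>j. (1/2) ^ Suc j * s powr (1 / p))"
    by (intro suminf_le assms(2) summable_mult2 sums_summable[OF power_half_series])
  also have "\<dots> = s powr (1 / p)"
    using sums_mult2[OF power_half_series, of "s powr (1 / p)"] by (simp add: sums_iff)
  finally have "(\<Sum>j. a j) powr p \<le> (s powr (1 / p)) powr p"
    by (intro powr_mono2) (use p a assms(2) in \<open>auto intro: suminf_nonneg\<close>)
  also have "\<dots> = s" using p s(2) by (simp add: powr_powr)
  finally show ?thesis unfolding s(1) by (rule ennreal_leI)
qed simp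

lemma Lp_int_suminf_le:
  fixes f :: "nat \<Rightarrow> complex ^ 'n \<Rightarrow> complex"
  assumes [measurable]: "\<And>j. f j \<in> borel_measurable lborel" "A \<in> sets lborel"
    and summable: "\<And>z. summable (\<lambda>j. norm (f j z))" and p: "p > 0"
  shows "Lp_int p A (\<lambda>z. \<Sum>j. f j z) \<le> (\<Sum>j. Lp_int p A (\<lambda>z. 2 ^ Suc j * f j z))"
proof -
  have "Lp_int p A (\<lambda>z. \<Sum>j. f j z)
      \<le> (\<integral>\<^sup>+ z. (\<Sum>j. indicator A z * ennreal (norm (2 ^ Suc j * f j z) powr p)) \<partial>lborel)"
    unfolding Lp_int_def
  proof (intro nn_integral_mono)
    fix z
    have "norm (\<Sum>j. f j z) powr p \<le> (\<Sum>j. norm (f j z)) powr p"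
      using p by (intro powr_mono2 summable_norm summable) auto
    then have "ennreal (norm (\<Sum>j. f j z) powr p) \<le> (\<Sum>j. ennreal ((2 ^ Suc j * norm (f j z)) powr p))"
      using suminf_powr_le_weighted[OF _ summable p] by (meson ennreal_leI norm_ge_zero order_trans)
    then show "indicator A z * ennreal (norm (\<Sum>j. f j z) powr p)
        \<le> (\<Sum>j. indicator A z * ennreal (norm (2 ^ Suc j * f j z) powr p))"
      by (cases "z \<in> A") (simp_all add: norm_mult norm_power)
  qed
  also have "\<dots> = (\<Sum>j. Lp_int p A (\<lambda>z. 2 ^ Suc j * f j z))"
    unfolding Lp_int_def by (rule nn_integral_suminf) simp
  finally show ?thesis .
qed

lemma ennreal_suminf_finite_geometric_tail:
  fixes c :: "nat \<Rightarrow> ennreal"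
  assumes fin: "\<And>j. c j < \<infinity>" and tail: "\<And>j. j \<ge> J \<Longrightarrow> c j \<le> ennreal ((1/2) ^ Suc j)"
  shows "(\<Sum>j. c j) < \<infinity>"
proof -
  define d where "d j = (if j < J then c j else 0)" for j
  have "(\<Sum>j. c j) \<le> (\<Sum>j. d j + ennreal ((1/2) ^ Suc j))"
    by (intro suminf_le summableI) (use tail in \<open>auto simp: d_def not_less\<close>)
  also have "\<dots> = (\<Sum>j. d j) + (\<Sum>j. ennreal ((1/2) ^ Suc j))"
    by (rule suminf_add[symmetric]) auto
  also have "(\<Sum>j. d j) = (\<Sum>j<J. d j)" by (rule suminf_finite) (auto simp: d_def)
  also have "(\<Sum>j. ennreal ((1/2::real) ^ Suc j)) = ennreal 1"
    using power_half_series
    by (subst suminf_ennreal2) (auto intro: sums_summable simp: sums_iff)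
  also have "(\<Sum>j<J. d j) + ennreal 1 < \<infinity>"
    using fin by (simp add: d_def less_top)
  finally show ?thesis .
qed

lemma norm_vector_scalar_mult: "norm (c *s v) = norm c * norm v" for v :: "complex ^ 'n"
  unfolding norm_vec_def vector_scalar_mult_def by (simp add: norm_mult L2_set_right_distrib)

lemma bounded_linear_vector_scalar_mult_left: "bounded_linear (\<lambda>w::complex. w *s (u::complex ^ 'n))"
proof (rule bounded_linear_intro[where K = "norm u"])
  show "(x + y) *s u = x *s u + y *s u" for x y by (simp add: vector_scalar_mult_def vec_eq_iff algebra_simps)
  show "(r *\<^sub>R x) *s u = r *\<^sub>R (x *s u)" for r x by (simp add: vector_scalar_mult_def vec_eq_iff mult_scaleR_left)
  show "norm (x *s u) \<le> norm x * norm u" for x by (simp add: norm_vector_scalar_mult)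
qed

lemma has_field_derivative_along_line:
  fixes f :: "complex ^ 'n \<Rightarrow> complex"
  assumes "(f has_derivative L) (at (x + w *s u))" "\<forall>c v. L (c *s v) = c * L v"
  shows "((\<lambda>w. f (x + w *s u)) has_field_derivative L u) (at w)"
proof -
  have "((\<lambda>w. x + w *s u) has_derivative (\<lambda>h. h *s u)) (at w)"
    using has_derivative_add[OF has_derivative_const
        bounded_linear.has_derivative[OF bounded_linear_vector_scalar_mult_left has_derivative_ident]]
    by simp
  from has_derivative_compose[OF this assms(1)]
  have "((\<lambda>w. f (x + w *s u)) has_derivative (\<lambda>h. L (h *s u))) (at w)" by (simp add: o_def)
  moreover have "(\<lambda>h. L (h *s u)) = (\<lambda>h. L u * h)" using assms(2) by (auto simp: mult.commute)
  ultimately show ?thesis unfolding has_field_derivative_def by simp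
qed

text \<open>Cauchy's estimate in several variables: restrict to the complex line through \<open>x\<close>
  in direction \<open>v\<close> and apply the one-variable inequality.\<close>
lemma holo_on_derivative_bound:
  fixes f :: "complex ^ 'n \<Rightarrow> complex"
  assumes holo: "holo_on f \<Omega>" and sub: "cball x r \<subseteq> \<Omega>" and r: "r > 0"
    and B: "\<And>y. y \<in> cball x r \<Longrightarrow> norm (f y) \<le> B"
    and L: "(f has_derivative L) (at x)" "\<forall>c v. L (c *s v) = c * L v"
  shows "norm (L v) \<le> B / r * norm v"
proof (cases "v = 0")
  case True
  then show ?thesis using L(2)[rule_format, of 0 v] by simp
next
  case False
  define u where "u = complex_of_real (1 / norm v) *s v"
  have u: "norm u = 1" unfolding u_def norm_vector_scalar_mult using False by (simp add: norm_divide)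
  have v: "v = complex_of_real (norm v) *s u"
    unfolding u_def using False by (simp add: vector_scalar_mult_def vec_eq_iff)
  define \<phi> where "\<phi> w = f (x + w *s u)" for w
  have in_ball: "x + w *s u \<in> cball x r" if "norm w \<le> r" for w
    using that u unfolding mem_cball dist_norm by (simp add: norm_vector_scalar_mult)
  have deriv: "\<exists>D. (\<phi> has_field_derivative D) (at w)" if w: "norm w \<le> r" for w
  proof -
    obtain L' where "(f has_derivative L') (at (x + w *s u))" "\<forall>c v. L' (c *s v) = c * L' v"
      using holo in_ball[OF w] sub unfolding holo_on_def by blast
    then show ?thesis unfolding \<phi>_def by (blast intro: has_field_derivative_along_line)
  qed
  have "\<phi> holomorphic_on ball 0 r"
    unfolding holomorphic_on_def field_differentiable_def
  proof
    fix w :: complex assume "w \<in> ball 0 r"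
    then obtain D where "(\<phi> has_field_derivative D) (at w)" using deriv by fastforce
    then show "\<exists>D. (\<phi> has_field_derivative D) (at w within ball 0 r)"
      by (blast intro: has_field_derivative_at_within)
  qed
  moreover have "continuous_on (cball 0 r) \<phi>"
  proof (rule continuous_at_imp_continuous_on, rule ballI)
    fix w :: complex assume "w \<in> cball 0 r"
    then obtain D where "(\<phi> has_field_derivative D) (at w)" using deriv by fastforce
    then show "isCont \<phi> w" by (rule DERIV_isCont)
  qed
  moreover have "norm (\<phi> w) \<le> B" if "norm (0 - w) = r" for w
    unfolding \<phi>_def using that by (intro B in_ball) simp
  ultimately have "norm ((deriv ^^ 1) \<phi> 0) \<le> fact 1 * B / r ^ 1"
    by (intro Cauchy_inequality r) auto
  moreover have "deriv \<phi> 0 = L u"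
    by (rule DERIV_imp_deriv) (use has_field_derivative_along_line[of f L x 0 u] L in \<open>simp add: \<phi>_def[abs_def]\<close>)
  ultimately have Lu: "norm (L u) \<le> B / r" by simp
  have "L v = complex_of_real (norm v) * L u" using L(2) v by metis
  then have "norm (L v) = norm v * norm (L u)" by (simp add: norm_mult)
  also have "\<dots> \<le> norm v * (B / r)" by (intro mult_left_mono Lu) simp
  finally show ?thesis by (simp add: mult.commute)
qed

text \<open>Cauchy's estimate makes the series of derivatives converge uniformly near each point.\<close>
lemma holo_on_suminf:
  fixes f :: "nat \<Rightarrow> complex ^ 'n \<Rightarrow> complex"
  assumes \<Omega>: "open \<Omega>" and holo: "\<And>j. holo_on (f j) \<Omega>"
    and bound: "\<And>x. x \<in> \<Omega> \<Longrightarrow> \<exists>r>0. \<exists>m. cball x r \<subseteq> \<Omega> \<and> (\<forall>j\<ge>m. \<forall>y\<in>cball x r. norm (f j y) \<le> (1/2) ^ j)"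
  shows "holo_on (\<lambda>z. \<Sum>j. f j z) \<Omega>"
  unfolding holo_on_def
proof
  fix x0 assume "x0 \<in> \<Omega>"
  then obtain r0 m where r0: "r0 > 0" "cball x0 r0 \<subseteq> \<Omega>"
    and m: "\<And>j y. j \<ge> m \<Longrightarrow> y \<in> cball x0 r0 \<Longrightarrow> norm (f j y) \<le> (1/2) ^ j"
    using bound by blast
  define r where "r = r0 / 2"
  define S where "S = ball x0 r"
  have r: "r > 0" unfolding r_def using r0 by simp
  have S_cball: "cball x r \<subseteq> cball x0 r0" if "x \<in> S" for x
  proof
    fix y assume "y \<in> cball x r"
    then show "y \<in> cball x0 r0"
      using that dist_triangle[of x0 y x] unfolding S_def r_def by (simp add: dist_commute)
  qed
  have S_centre: "x \<in> cball x0 r0" if "x \<in> S" for x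
    using S_cball[OF that] centre_in_cball[of x r] r by (meson less_imp_le subsetD)
  have S_\<Omega>: "x \<in> \<Omega>" if "x \<in> S" for x
    using S_centre[OF that] r0(2) by auto
  have summable: "summable (\<lambda>j. f j x)" if "x \<in> S" for x
    by (rule geometric_tail_bound(1)[of m _ 1]) (use m S_centre[OF that] in auto)
  define D where "D j x = (SOME L. (f j has_derivative L) (at x) \<and> (\<forall>c v. L (c *s v) = c * L v))" for j x
  have D: "(f j has_derivative D j x) (at x) \<and> (\<forall>c v. D j x (c *s v) = c * D j x v)" if "x \<in> \<Omega>" for j x
  proof -
    have "\<exists>L. (f j has_derivative L) (at x) \<and> (\<forall>c v. L (c *s v) = c * L v)"
      using holo[of j] that unfolding holo_on_def by blast
    from someI_ex[OF this] show ?thesis unfolding D_def .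
  qed
  have D_bound: "norm (D j x v) \<le> norm v / r * (1/2) ^ j" if x: "x \<in> S" and j: "j \<ge> m" for j x v
  proof -
    have "norm (D j x v) \<le> (1/2) ^ j / r * norm v"
    proof (rule holo_on_derivative_bound[OF holo _ r _ conjunct1[OF D] conjunct2[OF D]])
      show "cball x r \<subseteq> \<Omega>" using S_cball[OF x] r0(2) by blast
      show "norm (f j y) \<le> (1/2) ^ j" if "y \<in> cball x r" for y
        using m[OF j] S_cball[OF x] that by blast
    qed (use S_\<Omega>[OF x] in blast)+
    then show ?thesis by (simp add: field_simps)
  qed
  have summable_D: "summable (\<lambda>j. D j x v)" if "x \<in> S" for x v
    by (rule geometric_tail_bound(1)[of m _ "norm v / r"]) (use D_bound[OF that] r in auto)
  define D' where "D' x v = (\<Sum>j. D j x v)" for x v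
  have D_tail: "norm (D' x v - (\<Sum>j<n. D j x v)) \<le> 2 * (norm v / r) * (1/2) ^ n"
    if "x \<in> S" "n \<ge> m" for x v n
    unfolding D'_def using D_bound[OF that(1)] that(2) r by (intro geometric_tail_bound(2)) auto
  have uniform: "\<forall>\<^sub>F n in sequentially. \<forall>x\<in>S. \<forall>v. norm ((\<Sum>j<n. D j x v) - D' x v) \<le> e * norm v"
    if e: "e > 0" for e
  proof -
    obtain N where N: "(1/2::real) ^ N < e * r / 2" using real_arch_pow_inv[of "e * r / 2" "1/2"] e r by auto
    have "norm ((\<Sum>j<n. D j x v) - D' x v) \<le> e * norm v" if "x \<in> S" "n \<ge> max N m" for x v n
    proof -
      have "(1/2::real) ^ n \<le> (1/2) ^ N" using that(2) by (intro power_decreasing) auto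
      with N have "(1/2::real) ^ n \<le> e * r / 2" by linarith
      then have "2 * (norm v / r) * (1/2) ^ n \<le> 2 * (norm v / r) * (e * r / 2)"
        using r by (intro mult_left_mono) auto
      also have "\<dots> = e * norm v" using r by simp
      finally show ?thesis using D_tail[OF that(1), of n v] that(2) by (simp add: norm_minus_commute)
    qed
    then show ?thesis unfolding eventually_sequentially by blast
  qed
  have x0: "x0 \<in> S" unfolding S_def using r by simp
  obtain g where g: "\<And>x. x \<in> S \<Longrightarrow> (\<lambda>n. f n x) sums g x \<and> (g has_derivative D' x) (at x within S)"
    using has_derivative_series[OF convex_ball[of x0 r, folded S_def]
        has_derivative_at_withinI[OF conjunct1[OF D[OF S_\<Omega>]]] uniform x0 summable_sums[OF summable[OF x0]]]
    by blast
  have g_deriv: "(g has_derivative D' x0) (at x0)"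
    using g[OF x0] at_within_open[OF x0] unfolding S_def by simp
  have g_eq: "g x = (\<Sum>j. f j x)" if "x \<in> S" for x using g[OF that] by (simp add: sums_iff)
  have "((\<lambda>z. \<Sum>j. f j z) has_derivative D' x0) (at x0)"
    by (rule has_derivative_transform_within_open[OF g_deriv _ x0 g_eq]) (simp_all add: S_def)
  moreover have "D' x0 (c *s v) = c * D' x0 v" for c v
  proof -
    have "D' x0 (c *s v) = (\<Sum>j. c * D j x0 v)"
      unfolding D'_def using conjunct2[OF D[OF S_\<Omega>[OF x0]]] by simp
    also have "\<dots> = c * D' x0 v" unfolding D'_def by (rule suminf_mult[OF summable_D[OF x0]])
    finally show ?thesis .
  qed
  ultimately show "\<exists>L. ((\<lambda>z. \<Sum>j. f j z) has_derivative L) (at x0) \<and> (\<forall>c v. L (c *s v) = c * L v)"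
    by blast
qed

section \<open>An element of the set\<close>

text \<open>Given open sets \<open>C k\<close> and functions \<open>F k\<close> with \<open>\<integral>\<^bsub>C k \<inter> \<Omega>\<^esub> |F k|\<^sup>q\<^sup>t = \<infinity>\<close>, the series
  \<open>\<Sum>\<^sub>k t\<^sub>k F\<^sub>k\<close> (\<open>series\<close>) is built together with increasing compact sets \<open>L\<^sub>k\<close> (\<open>compacts\<close>)
  exhausting \<open>\<Omega>\<close>. The coefficient \<open>t\<^sub>k\<close> (\<open>coeff\<close>) is so small that the \<open>k\<close>-th term is at most
  \<open>2\<^sup>-\<^sup>k\<close> on \<open>L\<^sub>k\<close> and small in every \<open>L\<^sup>p\<close>, and is one of two candidates chosen so that the partial
  sum \<open>H\<^sub>k\<^sub>+\<^sub>1\<close> (\<open>partial_sum\<close>) still has infinite integral over \<open>C k \<inter> \<Omega>\<close>. A compact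
  \<open>K\<^sub>k \<subseteq> C k \<inter> \<Omega>\<close> carrying a large part of that integral is then added to \<open>L\<^sub>k\<^sub>+\<^sub>1\<close>, so that the
  series differs from \<open>H\<^sub>k\<^sub>+\<^sub>1\<close> by at most \<open>1\<close> on \<open>K\<^sub>k\<close>.\<close>
locale blowup_series =
  fixes \<Omega> :: "(complex ^ 'n) set" and q qt :: real
    and F :: "nat \<Rightarrow> complex ^ 'n \<Rightarrow> complex" and C :: "nat \<Rightarrow> (complex ^ 'n) set"
  assumes open_\<Omega>: "open \<Omega>" and bounded_\<Omega>: "bounded \<Omega>" and q: "1 < q" and q_less: "q < qt"
    and F: "\<And>k. F k \<in> OLp_below q \<Omega>" and open_C: "\<And>k. open (C k)"
    and F_infinite: "\<And>k. Lp_int qt (C k \<inter> \<Omega>) (F k) = \<infinity>"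
begin

definition sup_norm :: "nat \<Rightarrow> (complex ^ 'n) set \<Rightarrow> real" where
  "sup_norm k L = (SUP z\<in>L. norm (F k z))"

definition mass :: "nat \<Rightarrow> real" where
  "mass k = enn2real (Lp_int 1 \<Omega> (F k)) + enn2real (Lp_int (pexp q (Suc k)) \<Omega> (F k))"

text \<open>The absolute value guards against the junk value of \<open>SUP\<close> over the empty set.\<close>
definition step_bound :: "nat \<Rightarrow> (complex ^ 'n) set \<Rightarrow> real" where
  "step_bound k L = min 1 (min ((1/2) ^ k / (1 + \<bar>sup_norm k L\<bar>))
      ((1/2) ^ Suc k / ((2 powr q) ^ Suc k * (1 + mass k))))"

definition step :: "nat \<Rightarrow> (complex ^ 'n \<Rightarrow> complex) \<Rightarrow> (complex ^ 'n) set \<Rightarrow> real" where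
  "step k H L = (if Lp_int qt (C k \<inter> \<Omega>) (\<lambda>z. H z + complex_of_real (step_bound k L) * F k z) = \<infinity>
      then step_bound k L else step_bound k L / 2)"

definition large_compact :: "nat \<Rightarrow> (complex ^ 'n \<Rightarrow> complex) \<Rightarrow> (complex ^ 'n) set" where
  "large_compact k H = (SOME K. compact K \<and> K \<subseteq> C k \<inter> \<Omega> \<and>
      ennreal (2 powr qt * (real k + measure lborel \<Omega>)) < Lp_int qt K H)"

primrec stage :: "nat \<Rightarrow> (complex ^ 'n \<Rightarrow> complex) \<times> (complex ^ 'n) set" where
  "stage 0 = ((\<lambda>_. 0), {})"
| "stage (Suc k) = (let H = fst (stage k); L = snd (stage k);
     H' = (\<lambda>z. H z + complex_of_real (step k H L) * F k z) in (H', L \<union> large_compact k H' \<union> exhaustion \<Omega> k))"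

definition partial_sum :: "nat \<Rightarrow> complex ^ 'n \<Rightarrow> complex" where "partial_sum k = fst (stage k)"
definition compacts :: "nat \<Rightarrow> (complex ^ 'n) set" where "compacts k = snd (stage k)"
definition coeff :: "nat \<Rightarrow> real" where "coeff k = step k (partial_sum k) (compacts k)"
definition K :: "nat \<Rightarrow> (complex ^ 'n) set" where "K k = large_compact k (partial_sum (Suc k))"
definition series_term :: "nat \<Rightarrow> complex ^ 'n \<Rightarrow> complex" where "series_term j z = complex_of_real (coeff j) * F j z"
definition series :: "complex ^ 'n \<Rightarrow> complex" where "series z = (\<Sum>j. series_term j z)"

lemma partial_sum_0: "partial_sum 0 = (\<lambda>_. 0)" unfolding partial_sum_def by simp
lemma compacts_0: "compacts 0 = {}" unfolding compacts_def by simp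
lemma partial_sum_Suc: "partial_sum (Suc k) = (\<lambda>z. partial_sum k z + series_term k z)"
  unfolding partial_sum_def coeff_def compacts_def series_term_def by (simp add: Let_def)
lemma compacts_Suc: "compacts (Suc k) = compacts k \<union> K k \<union> exhaustion \<Omega> k"
  unfolding compacts_def K_def partial_sum_def coeff_def by (simp add: Let_def)

lemma partial_sum_eq_sum: "partial_sum m z = (\<Sum>j<m. series_term j z)"
  by (induction m) (simp_all add: partial_sum_0 partial_sum_Suc)

lemma sets_\<Omega> [measurable]: "\<Omega> \<in> sets lborel" using open_\<Omega> by simp
lemma sets_C_\<Omega> [measurable]: "C k \<inter> \<Omega> \<in> sets lborel" using open_C open_\<Omega> by auto
lemma F_measurable [measurable]: "F k \<in> borel_measurable lborel"
  using OLp_below_borel_measurable[OF F q open_\<Omega>] .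

lemma mass_nonneg: "mass k \<ge> 0"
  unfolding mass_def by simp

lemma step_bound_pos: "0 < step_bound k L" "step_bound k L \<le> 1"
  unfolding step_bound_def using mass_nonneg[of k] by auto

lemma coeff_bounds: "0 < coeff k" "coeff k \<le> step_bound k (compacts k)"
  unfolding coeff_def step_def using step_bound_pos[of k "compacts k"] by auto

lemma series_term_in_OLp_below: "series_term k \<in> OLp_below q \<Omega>"
  using OLp_below_add_cmult[OF zero_in_OLp_below F q open_\<Omega>] unfolding series_term_def[abs_def] by simp

lemma partial_sum_in_OLp_below: "partial_sum k \<in> OLp_below q \<Omega>"
  by (induction k)
    (simp_all add: partial_sum_0 partial_sum_Suc zero_in_OLp_below
      OLp_below_add_cmult[OF _ series_term_in_OLp_below q open_\<Omega>, of _ 1, simplified])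

lemma partial_sum_measurable [measurable]: "partial_sum k \<in> borel_measurable lborel"
  using OLp_below_borel_measurable[OF partial_sum_in_OLp_below q open_\<Omega>] .

text \<open>At most one of the two candidates \<open>step_bound\<close> and \<open>step_bound / 2\<close> keeps the integral
  finite, and \<open>step\<close> avoids it.\<close>
lemma partial_sum_Suc_infinite: "Lp_int qt (C k \<inter> \<Omega>) (partial_sum (Suc k)) = \<infinity>"
proof -
  define \<tau> where "\<tau> = step_bound k (compacts k)"
  have "\<tau> > 0" unfolding \<tau>_def by (rule step_bound_pos)
  show ?thesis
  proof (cases "Lp_int qt (C k \<inter> \<Omega>) (\<lambda>z. partial_sum k z + complex_of_real \<tau> * F k z) = \<infinity>")
    case True
    then show ?thesis
      unfolding partial_sum_Suc series_term_def coeff_def step_def \<tau>_def by simp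
  next
    case False
    then have "Lp_int qt (C k \<inter> \<Omega>) (\<lambda>z. partial_sum k z + complex_of_real (\<tau> / 2) * F k z) = \<infinity>"
      using \<open>\<tau> > 0\<close> q q_less
      by (intro Lp_int_add_cmult_infinite[OF F_measurable partial_sum_measurable sets_C_\<Omega> _ F_infinite])
        (auto simp: less_top)
    then show ?thesis
      using False unfolding partial_sum_Suc series_term_def coeff_def step_def \<tau>_def by simp
  qed
qed

lemma K: "compact (K k)" "K k \<subseteq> C k \<inter> \<Omega>"
  "ennreal (2 powr qt * (real k + measure lborel \<Omega>)) < Lp_int qt (K k) (partial_sum (Suc k))"
proof -
  obtain K' where "compact K'" "K' \<subseteq> C k \<inter> \<Omega>"
    "ennreal (2 powr qt * (real k + measure lborel \<Omega>)) < Lp_int qt K' (partial_sum (Suc k))"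
    by (rule Lp_int_infinite_imp_compact_greater[OF _ _ partial_sum_measurable partial_sum_Suc_infinite])
      (use bounded_\<Omega> open_C open_\<Omega> in \<open>auto intro: bounded_subset\<close>)
  then show "compact (K k)" "K k \<subseteq> C k \<inter> \<Omega>"
    "ennreal (2 powr qt * (real k + measure lborel \<Omega>)) < Lp_int qt (K k) (partial_sum (Suc k))"
    unfolding K_def large_compact_def by (metis (mono_tags, lifting) someI)+
qed

lemma compacts: "compact (compacts k)" "compacts k \<subseteq> \<Omega>"
proof (induction k)
  case 0
  show "compact (compacts 0)" "compacts 0 \<subseteq> \<Omega>" by (simp_all add: compacts_0)
next
  case (Suc k)
  show "compact (compacts (Suc k))"
    unfolding compacts_Suc using Suc K(1) compact_exhaustion[OF bounded_\<Omega>] by (intro compact_Un) auto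
  show "compacts (Suc k) \<subseteq> \<Omega>"
    unfolding compacts_Suc using Suc K(2)[of k] exhaustion_subset[of \<Omega> k] by auto
qed

lemma compacts_mono: "m \<le> j \<Longrightarrow> compacts m \<subseteq> compacts j"
  by (rule lift_Suc_mono_le[of compacts]) (auto simp: compacts_Suc)

lemma cball_subset_compacts:
  assumes "z \<in> \<Omega>" obtains r m where "r > 0" "cball z r \<subseteq> compacts m"
proof -
  obtain r m where "r > 0" "cball z r \<subseteq> exhaustion \<Omega> m"
    using cball_subset_exhaustion[OF bounded_\<Omega> open_\<Omega> assms] .
  then show thesis using that[of r "Suc m"] unfolding compacts_Suc by blast
qed

lemma norm_F_le_sup_norm:
  assumes "z \<in> compacts k" shows "norm (F k z) \<le> sup_norm k (compacts k)"
proof -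
  have "continuous_on (compacts k) (\<lambda>z. norm (F k z))"
    using compacts(2) holo_on_imp_continuous_on[OF OLp_belowD(1)[OF F q]]
    by (intro continuous_on_norm) (rule continuous_on_subset)
  then have "bounded ((\<lambda>z. norm (F k z)) ` compacts k)"
    using compacts(1) by (intro compact_imp_bounded compact_continuous_image)
  then show ?thesis
    unfolding sup_norm_def using assms by (intro cSUP_upper bounded_imp_bdd_above)
qed

lemma norm_series_term_le: "z \<in> compacts m \<Longrightarrow> m \<le> j \<Longrightarrow> norm (series_term j z) \<le> (1/2) ^ j"
proof -
  assume "z \<in> compacts m" "m \<le> j"
  then have z: "z \<in> compacts j" using compacts_mono by blast
  have "norm (series_term j z) = coeff j * norm (F j z)"
    using coeff_bounds(1)[of j] unfolding series_term_def by (simp add: norm_mult)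
  also have "\<dots> \<le> step_bound j (compacts j) * (1 + \<bar>sup_norm j (compacts j)\<bar>)"
    using coeff_bounds[of j] norm_F_le_sup_norm[OF z] by (intro mult_mono) auto
  also have "\<dots> \<le> (1/2) ^ j / (1 + \<bar>sup_norm j (compacts j)\<bar>) * (1 + \<bar>sup_norm j (compacts j)\<bar>)"
    unfolding step_bound_def by (intro mult_right_mono) auto
  finally show ?thesis by simp
qed

lemma coeff_mass_le: "coeff k * ((2 powr q) ^ Suc k * (1 + mass k)) \<le> (1/2) ^ Suc k"
proof -
  have pos: "(2 powr q) ^ Suc k * (1 + mass k) > 0" using mass_nonneg[of k] by simp
  have "coeff k \<le> (1/2) ^ Suc k / ((2 powr q) ^ Suc k * (1 + mass k))"
    using coeff_bounds(2)[of k] unfolding step_bound_def by simp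
  then show ?thesis unfolding pos_le_divide_eq[OF pos] .
qed

lemma series_term_zero: "z \<notin> \<Omega> \<Longrightarrow> series_term j z = 0"
  unfolding series_term_def using OLp_belowD(2)[OF F q] by simp

lemma series_term_eventually_small: "\<exists>m. \<forall>j\<ge>m. norm (series_term j z) \<le> 1 * (1/2) ^ j"
proof (cases "z \<in> \<Omega>")
  case True
  then obtain r m where "r > 0" "cball z r \<subseteq> compacts m" by (rule cball_subset_compacts)
  then have "z \<in> compacts m" using centre_in_cball[of z r] by auto
  then show ?thesis using norm_series_term_le[of z m] by auto
qed (simp add: series_term_zero)

lemma summable_norm_series_term: "summable (\<lambda>j. norm (series_term j z))"
proof -
  obtain m where "\<forall>j\<ge>m. norm (series_term j z) \<le> 1 * (1/2) ^ j" using series_term_eventually_small by blast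
  then show ?thesis by (intro geometric_tail_bound(1)[of m _ 1]) auto
qed

lemma series_minus_partial_sum:
  assumes "z \<in> compacts m" shows "norm (series z - partial_sum m z) \<le> 2 * (1/2) ^ m"
  unfolding series_def partial_sum_eq_sum
  using geometric_tail_bound(2)[of m "\<lambda>j. series_term j z" 1] norm_series_term_le[OF assms] by simp

lemma series_zero: "z \<notin> \<Omega> \<Longrightarrow> series z = 0"
  unfolding series_def by (simp add: series_term_zero)

lemma holo_on_series: "holo_on series \<Omega>"
  unfolding series_def[abs_def]
proof (rule holo_on_suminf[OF open_\<Omega>])
  show "holo_on (series_term j) \<Omega>" for j
    unfolding series_term_def[abs_def] by (rule holo_on_cmult[OF OLp_belowD(1)[OF F q]])
  fix x assume "x \<in> \<Omega>"
  then obtain r m where "r > 0" "cball x r \<subseteq> compacts m" by (rule cball_subset_compacts)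
  then show "\<exists>r>0. \<exists>m. cball x r \<subseteq> \<Omega> \<and> (\<forall>j\<ge>m. \<forall>y\<in>cball x r. norm (series_term j y) \<le> (1/2) ^ j)"
    using compacts(2)[of m] norm_series_term_le by blast
qed

lemma series_measurable [measurable]: "series \<in> borel_measurable lborel"
  using borel_measurable_holo_on[OF holo_on_series open_\<Omega>] series_zero by blast

text \<open>For \<open>p < q\<close>, eventually \<open>p \<le> pexp q (Suc j)\<close>, and then the \<open>j\<close>-th weighted series_term has
  \<open>p\<close>-integral at most \<open>(2\<^sup>q)\<^sup>j\<^sup>+\<^sup>1 t\<^sub>j mass\<^sub>j \<le> 2\<^sup>-\<^sup>j\<^sup>-\<^sup>1\<close>.\<close>
lemma Lp_int_series_finite:
  assumes p: "1 \<le> p" "p < q"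
  shows "Lp_int p \<Omega> series < \<infinity>"
proof -
  define c where "c j = Lp_int p \<Omega> (\<lambda>z. 2 ^ Suc j * series_term j z)" for j
  obtain J where J: "\<And>j. J \<le> j \<Longrightarrow> p \<le> pexp q j" using eventually_le_pexp[OF p(2)] by blast
  have c_eq: "c j = ennreal ((2 ^ Suc j * coeff j) powr p) * Lp_int p \<Omega> (F j)" for j
    unfolding c_def series_term_def mult.assoc[symmetric] using coeff_bounds(1)[of j]
    by (simp add: Lp_int_cmult[OF F_measurable sets_\<Omega>] norm_mult norm_power)
  have "Lp_int p \<Omega> series \<le> (\<Sum>j. c j)"
    unfolding series_def[abs_def] c_def using p
    by (intro Lp_int_suminf_le summable_norm_series_term sets_\<Omega>) (auto simp: series_term_def)
  also have "\<dots> < \<infinity>"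
  proof (rule ennreal_suminf_finite_geometric_tail[where J = J])
    show "c j < \<infinity>" for j
      unfolding c_eq using OLp_belowD(3)[OF F q p] by (simp add: ennreal_mult_less_top)
  next
    fix j assume "J \<le> j"
    then have pj: "p \<le> pexp q (Suc j)" using J by simp
    have t: "0 < coeff j" "coeff j \<le> 1" using coeff_bounds[of j] step_bound_pos[of j "compacts j"] by auto
    have "(2 ^ Suc j * coeff j) powr p = (2 ^ Suc j) powr p * coeff j powr p"
      using t by (simp add: powr_mult)
    also have "\<dots> \<le> (2 ^ Suc j) powr q * coeff j"
      using p t one_le_power[of "2::real" "Suc j"] by (intro mult_mono powr_mono powr_le_one_le) auto
    also have "(2 ^ Suc j :: real) powr q = (2 powr q) ^ Suc j"
    proof -
      have "(2 ^ Suc j :: real) = 2 powr real (Suc j)" by (rule powr_realpow[symmetric]) simp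
      then have "(2 ^ Suc j :: real) powr q = 2 powr (real (Suc j) * q)" by (simp only: powr_powr)
      also have "\<dots> = (2 powr q) ^ Suc j" by (rule powr_power[symmetric]) simp
      finally show ?thesis .
    qed
    finally have weight: "(2 ^ Suc j * coeff j) powr p \<le> (2 powr q) ^ Suc j * coeff j" .
    have "Lp_int p \<Omega> (F j) \<le> Lp_int 1 \<Omega> (F j) + Lp_int (pexp q (Suc j)) \<Omega> (F j)"
      using p pj by (intro Lp_int_le_Lp_int_add F_measurable sets_\<Omega>) auto
    also have "\<dots> = ennreal (mass j)"
    proof -
      have "Lp_int 1 \<Omega> (F j) < \<infinity>" "Lp_int (pexp q (Suc j)) \<Omega> (F j) < \<infinity>"
        using OLp_belowD(3)[OF F q] pexp_bounds[OF q, of j] q by auto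
      then show ?thesis unfolding mass_def by (subst ennreal_plus) (auto simp: ennreal_enn2real_if)
    qed
    finally have "c j \<le> ennreal ((2 powr q) ^ Suc j * coeff j) * ennreal (mass j)"
      unfolding c_eq by (intro mult_mono ennreal_leI weight) auto
    also have "\<dots> = ennreal ((2 powr q) ^ Suc j * coeff j * mass j)"
      by (rule ennreal_mult[symmetric]) (use t mass_nonneg in auto)
    also have "\<dots> \<le> ennreal ((1/2) ^ Suc j)"
    proof (rule ennreal_leI)
      have "(2 powr q) ^ Suc j * coeff j * mass j \<le> coeff j * ((2 powr q) ^ Suc j * (1 + mass j))"
        using t by (simp add: algebra_simps)
      then show "(2 powr q) ^ Suc j * coeff j * mass j \<le> (1/2) ^ Suc j"
        using coeff_mass_le[of j] by linarith
    qed
    finally show "c j \<le> ennreal ((1/2) ^ Suc j)" .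
  qed
  finally show ?thesis .
qed

lemma series_in_OLp_below: "series \<in> OLp_below q \<Omega>"
  using holo_on_series series_zero Lp_int_series_finite by (intro OLp_belowI)

text \<open>On \<open>K k \<subseteq> compacts (k + 1)\<close> the series differs from the partial sum by at most \<open>1\<close>, so the
  large integral of the partial sum over \<open>K k\<close> is inherited up to the volume of \<open>\<Omega>\<close>.\<close>
lemma Lp_int_series_greater: "ennreal (real k) < Lp_int qt (C k \<inter> \<Omega>) series"
proof -
  define V where "V = measure lborel \<Omega>"
  have V: "emeasure lborel \<Omega> = ennreal V" "V \<ge> 0"
    unfolding V_def using emeasure_bounded_finite[OF bounded_\<Omega>]
    by (auto simp: emeasure_eq_ennreal_measure less_top)
  have K_meas [measurable]: "K k \<in> sets lborel" using K(1)[of k] by (simp add: compact_imp_closed)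
  define T where "T z = partial_sum (Suc k) z - series z" for z
  have T_meas [measurable]: "T \<in> borel_measurable lborel" unfolding T_def by measurable
  have "Lp_int qt (K k) T \<le> (\<integral>\<^sup>+ z. indicator (K k) z \<partial>lborel)"
    unfolding Lp_int_def
  proof (intro nn_integral_mono)
    fix z
    show "indicator (K k) z * ennreal (norm (T z) powr qt) \<le> indicator (K k) z"
    proof (cases "z \<in> K k")
      case True
      then have "z \<in> compacts (Suc k)" unfolding compacts_Suc by simp
      then have "norm (T z) \<le> 2 * (1/2) ^ Suc k"
        unfolding T_def by (subst norm_minus_commute) (rule series_minus_partial_sum)
      also have "\<dots> \<le> 1" by (simp add: power_le_one)
      finally have "norm (T z) powr qt \<le> 1" using q q_less by (intro powr_le1) auto
      then show ?thesis using True by simp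
    qed simp
  qed
  also have "\<dots> = emeasure lborel (K k)" by (rule nn_integral_indicator[OF K_meas])
  also have "\<dots> \<le> ennreal V"
    unfolding V(1)[symmetric] using K(2)[of k] by (intro emeasure_mono sets_\<Omega>) auto
  finally have T_small: "Lp_int qt (K k) T \<le> ennreal V" .
  have "ennreal (2 powr qt * (real k + V)) < Lp_int qt (K k) (partial_sum (Suc k))"
    using K(3) unfolding V_def .
  also have "partial_sum (Suc k) = (\<lambda>z. series z + T z)" unfolding T_def by auto
  also have "Lp_int qt (K k) \<dots> \<le> ennreal (2 powr qt) * (Lp_int qt (K k) series + Lp_int qt (K k) T)"
    using q q_less by (intro Lp_int_add_le K_meas) auto
  also have "\<dots> \<le> ennreal (2 powr qt) * (Lp_int qt (K k) series + ennreal V)"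
    by (intro mult_left_mono add_left_mono T_small) auto
  finally have large: "ennreal (2 powr qt * (real k + V))
      < ennreal (2 powr qt) * (Lp_int qt (K k) series + ennreal V)" .
  have "ennreal (real k) < Lp_int qt (K k) series"
  proof (rule ccontr)
    assume "\<not> ?thesis"
    then have "ennreal (2 powr qt) * (Lp_int qt (K k) series + ennreal V)
        \<le> ennreal (2 powr qt) * (ennreal (real k) + ennreal V)"
      by (intro mult_left_mono add_right_mono) auto
    also have "\<dots> = ennreal (2 powr qt * (real k + V))"
      using V(2) by (simp add: ennreal_mult'[symmetric] ennreal_plus[symmetric] del: ennreal_plus)
    finally show False using large by simp
  qed
  also have "\<dots> \<le> Lp_int qt (C k \<inter> \<Omega>) series" by (rule Lp_int_mono_set[OF K(2)])
  finally show ?thesis .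
qed

end

text \<open>Every basis element meeting the frontier is enumerated infinitely often, as \<open>C k\<close> with
  \<open>k = prod_encode (i, j)\<close> for all \<open>j\<close>, so the integral of the series over it exceeds every \<open>j\<close>.\<close>
lemma frontier_blowup_nonempty:
  fixes \<Omega> :: "(complex ^ 'n) set" and q qt :: real
  assumes \<Omega>: "open \<Omega>" "bounded \<Omega>" and q: "1 < q" "q < qt"
    and hyp: "\<forall>\<zeta>\<in>frontier \<Omega>. \<exists>f \<in> OLp_below q \<Omega>. \<forall>\<epsilon>>0. Lp_int qt (ball \<zeta> \<epsilon> \<inter> \<Omega>) f = \<infinity>"
  obtains h where "h \<in> frontier_blowup q qt \<Omega>"
proof -
  obtain B :: "(complex ^ 'n) set set" where B: "countable B" "topological_basis B"
    using ex_countable_basis by blast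
  define B' where "B' = {C \<in> B. C \<inter> frontier \<Omega> \<noteq> {}}"
  show thesis
  proof (cases "B' = {}")
    case True
    then have "(\<lambda>_. 0) \<in> frontier_blowup q qt \<Omega>"
      unfolding frontier_blowup_iff_basis[OF B(2)] B'_def using zero_in_OLp_below by blast
    then show thesis by (rule that)
  next
    case False
    define C where "C k = from_nat_into B' (fst (prod_decode k))" for k
    have range_C: "range (from_nat_into B') = B'"
      using B(1) False unfolding B'_def by (intro range_from_nat_into) auto
    then have C: "C k \<in> B'" for k unfolding C_def by auto
    have "\<exists>f \<in> OLp_below q \<Omega>. Lp_int qt (C k \<inter> \<Omega>) f = \<infinity>" for k
    proof -
      obtain \<zeta> where \<zeta>: "\<zeta> \<in> C k" "\<zeta> \<in> frontier \<Omega>" using C[of k] unfolding B'_def by auto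
      moreover have "open (C k)" using C[of k] topological_basis_open[OF B(2)] unfolding B'_def by auto
      ultimately obtain \<epsilon> where "\<epsilon> > 0" "ball \<zeta> \<epsilon> \<subseteq> C k" using open_contains_ball by blast
      moreover obtain f where "f \<in> OLp_below q \<Omega>" "\<forall>\<epsilon>>0. Lp_int qt (ball \<zeta> \<epsilon> \<inter> \<Omega>) f = \<infinity>"
        using hyp \<zeta>(2) by blast
      ultimately show ?thesis by (blast intro: Lp_int_infinite_mono_set)
    qed
    then obtain F where F: "\<And>k. F k \<in> OLp_below q \<Omega>" "\<And>k. Lp_int qt (C k \<inter> \<Omega>) (F k) = \<infinity>"
      by metis
    interpret blowup_series \<Omega> q qt F C
      using \<Omega> q F C topological_basis_open[OF B(2)] unfolding B'_def by unfold_locales auto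
    have "Lp_int qt (D \<inter> \<Omega>) series = \<infinity>" if "D \<in> B'" for D
    proof -
      obtain i where i: "D = from_nat_into B' i" using \<open>D \<in> B'\<close> range_C by blast
      have "of_nat j < Lp_int qt (D \<inter> \<Omega>) series" for j
      proof -
        have "of_nat j \<le> ennreal (real (prod_encode (i, j)))"
          using le_prod_encode_2[of j i] by (simp add: ennreal_of_nat_eq_real_of_nat)
        also have "\<dots> < Lp_int qt (C (prod_encode (i, j)) \<inter> \<Omega>) series" by (rule Lp_int_series_greater)
        finally show ?thesis unfolding C_def i by simp
      qed
      then show ?thesis unfolding ennreal_eq_infinity_iff_of_nat_less by blast
    qed
    then have "series \<in> frontier_blowup q qt \<Omega>"
      unfolding frontier_blowup_iff_basis[OF B(2)] B'_def using series_in_OLp_below by blast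
    then show thesis by (rule that)
  qed
qed

theorem mainTheorem6:
  fixes \<Omega> :: "(complex ^ 'n) set" and q qt :: real
  assumes "open \<Omega>" and "bounded \<Omega>" and "1 < q" and "q < qt"
    and "\<forall>\<zeta>\<in>frontier \<Omega>. \<exists>f \<in> OLp_below q \<Omega>.
           \<forall>\<epsilon>>0. Lp_int qt (ball \<zeta> \<epsilon> \<inter> \<Omega>) f = \<infinity>"
  shows "OLp_top q \<Omega> closure_of
           {g \<in> OLp_below q \<Omega>. \<forall>\<zeta>\<in>frontier \<Omega>. \<forall>\<epsilon>>0. Lp_int qt (ball \<zeta> \<epsilon> \<inter> \<Omega>) g = \<infinity>}
         = topspace (OLp_top q \<Omega>)
       \<and> gdelta_in (OLp_top q \<Omega>)
           {g \<in> OLp_below q \<Omega>. \<forall>\<zeta>\<in>frontier \<Omega>. \<forall>\<epsilon>>0. Lp_int qt (ball \<zeta> \<epsilon> \<inter> \<Omega>) g = \<infinity>}"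
proof -
  have qt: "qt > 0" using assms(3,4) by simp
  obtain h where "h \<in> frontier_blowup q qt \<Omega>" using frontier_blowup_nonempty[OF assms] .
  then show ?thesis
    unfolding frontier_blowup_def[symmetric]
    using closure_of_frontier_blowup[OF assms(1,3) qt] gdelta_in_frontier_blowup[OF assms(1,3) qt]
    by blast
qed

end
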